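(* Let $F$ be a once-punctured torus equipped with a point of the decorated super Teichmüller space $S\tilde T(F)$ with values in the Grassmann algebra $\mathbb{R}_{S[N]}$. For every $\delta>0$ there exists a constant $M=M_{\delta}\geq 1$ (depending on $\delta$ and the point) such that \[ \|s(a)\|\leq M\cdot|\epsilon(a)|^{1+\delta} \] for the super $\lambda$-length $a$ of every ideal arc of $F$.
   Context: $\mathbb{R}_{S[N]}$ is the real Grassmann algebra generated by anticommuting $\beta_{[1]},\dots,\beta_{[N]}$; each $x$ is $\sum_\lambda x_\lambda\beta_{[\lambda]}$ over increasing multi-indices, the body $\epsilon(x)$ is the coefficient of $1$, the soul is $s(x)=x-\epsilon(x)\cdot1$, and $\|x\|=\sum_\lambda|x_\lambda|$. $S\tilde T(F)$ is the decorated $\mathrm{OSp}(1|2)$ super Teichmüller space (Penner–Zeitlin): a point assigns to every ideal arc of $F$ an even super $\lambda$-length with positive body, to the triangles of each ideal triangulation odd $\mu$-invariants, together with a spin structure; $\lambda$-lengths of the arcs of a triangulation $a,b,c$ and of the arc $d$ obtained by flipping $c$ satisfy $cd=a^2+b^2+abW_c$, with $W_c$ the product of the $\mu$-invariants of the two triangles adjacent to $c$ (ordered counter-clockwise then clockwise relative to the spin orientation of $c$). *)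

theory Defs
  imports Complex_Main
begin

text \<open>An element x = sum_lambda x_lambda beta_[lambda] is encoded by its coefficient function
  on multi-indices; a strictly increasing multi-index is encoded by the finite set of its
  entries (a subset of {1..N}).\<close>

type_synonym grass = "nat set \<Rightarrow> real"

definition in_grass :: "nat \<Rightarrow> grass \<Rightarrow> bool" where
  "in_grass N x \<longleftrightarrow> (\<forall>A. x A \<noteq> 0 \<longrightarrow> A \<subseteq> {1..N})"

text \<open>Sign of beta_[B] * beta_[C] = sign * beta_[B union C] for disjoint B, C:
  one transposition for every pair (i in B, j in C) with j < i.\<close>
definition gsign :: "nat set \<Rightarrow> nat set \<Rightarrow> real" where
  "gsign B C = (-1) ^ card {(i, j). i \<in> B \<and> j \<in> C \<and> j < i}"

definition gmul :: "nat \<Rightarrow> grass \<Rightarrow> grass \<Rightarrow> grass" where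
  "gmul N x y = (\<lambda>A. if A \<subseteq> {1..N}
      then (\<Sum>B\<in>Pow A. gsign B (A - B) * x B * y (A - B)) else 0)"

definition gadd :: "grass \<Rightarrow> grass \<Rightarrow> grass" where
  "gadd x y = (\<lambda>A. x A + y A)"

definition gscale :: "real \<Rightarrow> grass \<Rightarrow> grass" where
  "gscale r x = (\<lambda>A. r * x A)"

definition body :: "grass \<Rightarrow> real" where
  "body x = x {}"

definition soul :: "grass \<Rightarrow> grass" where
  "soul x = x({} := 0)"

definition gnorm :: "nat \<Rightarrow> grass \<Rightarrow> real" where
  "gnorm N x = (\<Sum>A\<in>Pow {1..N}. \<bar>x A\<bar>)"

definition is_even :: "nat \<Rightarrow> grass \<Rightarrow> bool" where
  "is_even N x \<longleftrightarrow> in_grass N x \<and> (\<forall>A. odd (card A) \<longrightarrow> x A = 0)"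

definition is_odd :: "nat \<Rightarrow> grass \<Rightarrow> bool" where
  "is_odd N x \<longleftrightarrow> in_grass N x \<and> (\<forall>A. even (card A) \<longrightarrow> x A = 0)"

text \<open>After fixing a marking H_1(F) = Z^2, ideal arcs of the once-punctured torus correspond
  to slopes, i.e. primitive vectors (m,n) up to sign; we normalise n > 0 or (m,n) = (1,0).
  Two arcs are disjoint (can occur in a common triangulation) iff |m n' - n m'| = 1, and
  ideal triangulations are triples of pairwise disjoint arcs (Farey triangles).\<close>

type_synonym arc = "int \<times> int"

definition is_arc :: "arc \<Rightarrow> bool" where
  "is_arc a \<longleftrightarrow> coprime (fst a) (snd a) \<and> (snd a > 0 \<or> (snd a = 0 \<and> fst a = 1))"

definition arcs_adjacent :: "arc \<Rightarrow> arc \<Rightarrow> bool" where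
  "arcs_adjacent a b \<longleftrightarrow> \<bar>fst a * snd b - snd a * fst b\<bar> = 1"

definition is_triangulation :: "arc \<Rightarrow> arc \<Rightarrow> arc \<Rightarrow> bool" where
  "is_triangulation a b c \<longleftrightarrow> is_arc a \<and> is_arc b \<and> is_arc c \<and>
     arcs_adjacent a b \<and> arcs_adjacent b c \<and> arcs_adjacent a c"

text \<open>Spin structures on the torus are the quadratic forms q on H_1(F;Z/2) with respect to the
  mod 2 intersection form; they are exactly q(m,n) = al*m + be*n + m*n (mod 2) for al, be in Z/2.
  The spin orientation of an arc c in a triangulation relative to the two triangles is
  recorded (up to the overall gauge of reversing all orientations at a triangle, which is
  absorbed in the sign of the mu-invariants) by the sign (-1)^q(c).\<close>

definition spin_q :: "bool \<Rightarrow> bool \<Rightarrow> arc \<Rightarrow> bool" where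
  "spin_q al be a = ((al \<and> odd (fst a)) \<noteq> ((be \<and> odd (snd a)) \<noteq> (odd (fst a) \<and> odd (snd a))))"

definition spin_sign :: "bool \<Rightarrow> bool \<Rightarrow> arc \<Rightarrow> real" where
  "spin_sign al be a = (if spin_q al be a then -1 else 1)"

text \<open>A point: super lambda-lengths lam (even, positive body) on all arcs; odd mu-invariants
  mu1 T, mu2 T of the two triangles of every triangulation T (given as a set of arcs);
  a spin structure (al, be); and the super Ptolemy relation c d = a^2 + b^2 + a b W_c for
  every flip of c in the triangulation {a,b,c} to d, where W_c is the product of the two
  mu-invariants, ordered according to the spin orientation of c.\<close>

definition W_inv :: "nat \<Rightarrow> (arc set \<Rightarrow> grass) \<Rightarrow> (arc set \<Rightarrow> grass) \<Rightarrow> bool \<Rightarrow> bool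
    \<Rightarrow> arc \<Rightarrow> arc \<Rightarrow> arc \<Rightarrow> grass" where
  "W_inv N mu1 mu2 al be a b c =
     gscale (spin_sign al be c) (gmul N (mu1 {a, b, c}) (mu2 {a, b, c}))"

definition super_teich_point :: "nat \<Rightarrow> (arc \<Rightarrow> grass) \<Rightarrow> (arc set \<Rightarrow> grass)
    \<Rightarrow> (arc set \<Rightarrow> grass) \<Rightarrow> bool \<Rightarrow> bool \<Rightarrow> bool" where
  "super_teich_point N lam mu1 mu2 al be \<longleftrightarrow>
     (\<forall>a. is_arc a \<longrightarrow> is_even N (lam a) \<and> body (lam a) > 0) \<and>
     (\<forall>a b c. is_triangulation a b c \<longrightarrow>
         is_odd N (mu1 {a, b, c}) \<and> is_odd N (mu2 {a, b, c})) \<and>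
     (\<forall>a b c d. is_triangulation a b c \<and> is_triangulation a b d \<and> c \<noteq> d \<longrightarrow>
         gmul N (lam c) (lam d) =
           gadd (gadd (gmul N (lam a) (lam a)) (gmul N (lam b) (lam b)))
                (gmul N (gmul N (lam a) (lam b)) (W_inv N mu1 mu2 al be a b c)))"

end

(*
  The bodies of the lambda-lengths satisfy the classical Ptolemy relation c d = a^2 + b^2
  (the mu-invariants are odd, so W has no body).  A Markov descent finds a reduced triangle;
  all other arcs are vertices of three Stern-Brocot trees hanging off its edges, and along
  these trees the bodies grow exponentially in the depth.

  For a multi-index A, the ratio U = lambda_A / body satisfies along each tree an averaging
  recursion U(c) + U(d) = p U(a) + q U(b) + defect with p + q = 2, where the defect is
  quadratic in coefficients of lower degree and the weight of the smaller neighbour is tiny.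
  The defect also involves W, which is uniformly bounded because comparing the Ptolemy
  relations of a flip in both directions shows that all triangles carry the same mu-product.
  Controlling the jumps of U by a potential shows that U grows only polynomially in the
  depth, i.e. slower than any power of the body.  Induction on the degree |A| gives
  |lambda_A| <= M body^(1 + delta) for every A, and the norm of the soul is a sum of
  2^N such terms.
*)
theory Submission
  imports Defs "HOL-Library.Product_Plus"
begin

section \<open>The Stern-Brocot tree of unimodular pairs\<close>

definition coord_sum :: "int \<times> int \<Rightarrow> int" where
  "coord_sum x = fst x + snd x"

definition det2 :: "int \<times> int \<Rightarrow> int \<times> int \<Rightarrow> int" where
  "det2 x y = fst x * snd y - snd x * fst y"

lemma coord_sum_add [simp]: "coord_sum (u + v) = coord_sum u + coord_sum v"
  by (simp add: coord_sum_def)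

text \<open>A vertex of the Stern-Brocot tree is the mediant u + v of the pair (u, v) recorded here.\<close>

inductive sb_pair :: "int \<times> int \<Rightarrow> int \<times> int \<Rightarrow> bool" where
  root: "sb_pair (1, 0) (0, 1)"
| left: "sb_pair u v \<Longrightarrow> sb_pair u (u + v)"
| right: "sb_pair u v \<Longrightarrow> sb_pair (u + v) v"

lemma sb_pair_coord_sum_pos: "sb_pair u v \<Longrightarrow> 1 \<le> coord_sum u \<and> 1 \<le> coord_sum v"
  by (induction rule: sb_pair.induct) (auto simp: coord_sum_def)

lemma sb_pair_det2: "sb_pair u v \<Longrightarrow> det2 u v = 1"
  by (induction rule: sb_pair.induct) (simp_all add: det2_def algebra_simps)

lemma sb_pair_additive_image:
  assumes "\<And>x y. S (x + y) = S x + S y" "sb_pair (S (1, 0)) (S (0, 1))"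
  shows "sb_pair u v \<Longrightarrow> sb_pair (S u) (S v)"
  by (induction rule: sb_pair.induct) (use assms sb_pair.left sb_pair.right in auto)

lemma sb_pair_mediant_surj:
  assumes "1 \<le> i" "1 \<le> j" "coprime i j"
  shows "\<exists>u v. sb_pair u v \<and> u + v = (i, j)"
  using assms
proof (induction "nat (i + j)" arbitrary: i j rule: less_induct)
  case less
  consider "i = j" | "j < i" | "i < j" by linarith
  then show ?case
  proof cases
    case 1
    then have "i = 1" using less.prems by simp
    then show ?thesis using 1 sb_pair.root by force
  next
    case 2
    have "coprime (i - j) j" using less.prems(3) by (simp add: coprime_iff_gcd_eq_1 gcd_diff1)
    then obtain u v where uv: "sb_pair u v" "u + v = (i - j, j)"
      using less.hyps[of "i - j" j] less.prems 2 by auto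
    let ?S = "\<lambda>x. (fst x + snd x, snd x)"
    have "sb_pair (?S u) (?S v)"
      by (rule sb_pair_additive_image[OF _ _ uv(1)]) (use sb_pair.left[OF sb_pair.root] in auto)
    moreover have "?S u + ?S v = (i, j)" using uv(2) by (auto simp: prod_eq_iff)
    ultimately show ?thesis by blast
  next
    case 3
    have "coprime i (j - i)"
      using less.prems(3) gcd_diff1[of j i] by (simp add: coprime_iff_gcd_eq_1 gcd.commute)
    then obtain u v where uv: "sb_pair u v" "u + v = (i, j - i)"
      using less.hyps[of i "j - i"] less.prems 3 by auto
    let ?S = "\<lambda>x. (fst x, fst x + snd x)"
    have "sb_pair (?S u) (?S v)"
      by (rule sb_pair_additive_image[OF _ _ uv(1)]) (use sb_pair.right[OF sb_pair.root] in auto)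
    moreover have "?S u + ?S v = (i, j)" using uv(2) by (auto simp: prod_eq_iff)
    ultimately show ?thesis by blast
  qed
qed


section \<open>Markov-type functions on the Stern-Brocot tree\<close>

lemma vieta_flip:
  fixes a b c d h :: real
  assumes "0 < c" and ptolemy: "d * c = a\<^sup>2 + b\<^sup>2" and markov: "a\<^sup>2 + b\<^sup>2 + c\<^sup>2 = h * a * b * c"
  shows "d + c = h * a * b" "a\<^sup>2 + b\<^sup>2 + d\<^sup>2 = h * a * b * d"
proof -
  have "c * (d + c) = c * (h * a * b)"
    using ptolemy markov by (simp add: algebra_simps power2_eq_square)
  then show sum: "d + c = h * a * b" using \<open>0 < c\<close> by simp
  have "a\<^sup>2 + b\<^sup>2 + d\<^sup>2 = d * (d + c)" using ptolemy by (simp add: algebra_simps power2_eq_square)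
  then show "a\<^sup>2 + b\<^sup>2 + d\<^sup>2 = h * a * b * d" unfolding sum by (simp add: ac_simps)
qed

lemma ptolemy_le:
  fixes a b c d :: real
  assumes "0 < d" "d \<le> b" "c * d = a\<^sup>2 + b\<^sup>2"
  shows "d \<le> c"
proof -
  have "d * d \<le> c * d"
    using assms mult_mono[of d b d b] by (simp add: power2_eq_square add_increasing)
  then show ?thesis using \<open>0 < d\<close> by simp
qed

locale ptolemy_tree =
  fixes E :: "int \<times> int \<Rightarrow> real"
  assumes E_pos: "\<And>x. 0 < E x"
    and E_uminus: "\<And>x. E (- x) = E x"
    and ptolemy: "\<And>u v. sb_pair u v \<Longrightarrow> E (u + v) * E (u - v) = (E u)\<^sup>2 + (E v)\<^sup>2"
    and root_ascending: "E (1, -1) \<le> E (1, 1)"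
begin

definition markov_h :: real where
  "markov_h = ((E (1, 0))\<^sup>2 + (E (0, 1))\<^sup>2 + (E (1, -1))\<^sup>2) / (E (1, 0) * E (0, 1) * E (1, -1))"

lemma markov_identity:
  "sb_pair u v \<Longrightarrow> (E u)\<^sup>2 + (E v)\<^sup>2 + (E (u - v))\<^sup>2 = markov_h * E u * E v * E (u - v)"
proof (induction rule: sb_pair.induct)
  case root
  show ?case
    using E_pos[of "(1, 0)"] E_pos[of "(0, 1)"] E_pos[of "(1, -1)"]
    by (simp add: markov_h_def field_simps)
next
  case (left u v)
  show ?case
    using vieta_flip(2)[OF E_pos ptolemy[OF left.hyps] left.IH] by (simp add: E_uminus ac_simps)
next
  case (right u v)
  show ?case
    using vieta_flip(2)[OF E_pos ptolemy[OF right.hyps] right.IH] by (simp add: ac_simps)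
qed

lemma flip_sum: "sb_pair u v \<Longrightarrow> E (u + v) + E (u - v) = markov_h * E u * E v"
  using vieta_flip(1)[OF E_pos ptolemy markov_identity] .

lemma summands_le_if_ascending:
  assumes "sb_pair u v" "E (u - v) \<le> E (u + v)"
  shows "E u \<le> E (u + v)" "E v \<le> E (u + v)"
proof -
  have "(E u)\<^sup>2 + (E v)\<^sup>2 \<le> (E (u + v))\<^sup>2"
    using ptolemy[OF assms(1)] mult_left_mono[OF assms(2), of "E (u + v)"] E_pos[of "u + v"]
    by (simp add: power2_eq_square)
  then have "(E u)\<^sup>2 \<le> (E (u + v))\<^sup>2" "(E v)\<^sup>2 \<le> (E (u + v))\<^sup>2"
    using zero_le_power2[of "E u"] zero_le_power2[of "E v"] by linarith+
  then show "E u \<le> E (u + v)" "E v \<le> E (u + v)"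
    by (auto intro: power2_le_imp_le[OF _ less_imp_le[OF E_pos]])
qed

lemma ascending: "sb_pair u v \<Longrightarrow> E (u - v) \<le> E (u + v)"
proof (induction rule: sb_pair.induct)
  case root
  show ?case using root_ascending by simp
next
  case (left u v)
  have "E v \<le> E (u + (u + v))"
    using ptolemy_le[OF E_pos summands_le_if_ascending(2)[OF left]]
      ptolemy[OF sb_pair.left[OF left.hyps]]
    by (simp add: E_uminus)
  then show ?case by (simp add: E_uminus)
next
  case (right u v)
  have "E u \<le> E (u + v + v)"
    using ptolemy_le[OF E_pos summands_le_if_ascending(1)[OF right]]
      ptolemy[OF sb_pair.right[OF right.hyps]]
    by (simp add: add.commute)
  then show ?case by simp
qed

lemma summands_le:
  assumes "sb_pair u v"
  shows "E u \<le> E (u + v)" "E v \<le> E (u + v)"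
  using summands_le_if_ascending[OF assms ascending[OF assms]] by simp_all

lemma markov_h_product_le: "sb_pair u v \<Longrightarrow> markov_h * E u * E v \<le> 2 * E (u + v)"
  using flip_sum ascending by fastforce

lemma markov_h_pos: "0 < markov_h"
  unfolding markov_h_def using E_pos[of "(1, 0)"] E_pos[of "(0, 1)"] E_pos[of "(1, -1)"]
  by (intro divide_pos_pos add_pos_pos mult_pos_pos) auto

lemma markov_h_root_gt_2: "2 < markov_h * E (1, 0)" "2 < markov_h * E (0, 1)"
proof -
  let ?a = "E (1, 0)" and ?b = "E (0, 1)" and ?c = "E (1, -1)"
  have pos: "0 < ?a" "0 < ?b" "0 < ?c" using E_pos by auto
  have "markov_h * ?a * (?b * ?c) = ?a\<^sup>2 + ?b\<^sup>2 + ?c\<^sup>2"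
    using pos by (simp add: markov_h_def field_simps power2_eq_square)
  moreover have "2 * (?b * ?c) < ?a\<^sup>2 + ?b\<^sup>2 + ?c\<^sup>2"
    using sum_squares_bound[of ?b ?c] pos zero_less_power[of ?a 2] by linarith
  ultimately have "2 * (?b * ?c) < markov_h * ?a * (?b * ?c)" by linarith
  then show "2 < markov_h * ?a" using pos by (simp add: mult_less_cancel_right_pos)
  have "markov_h * ?b * (?a * ?c) = ?a\<^sup>2 + ?b\<^sup>2 + ?c\<^sup>2"
    using pos by (simp add: markov_h_def field_simps power2_eq_square)
  moreover have "2 * (?a * ?c) < ?a\<^sup>2 + ?b\<^sup>2 + ?c\<^sup>2"
    using sum_squares_bound[of ?a ?c] pos zero_less_power[of ?b 2] by linarith
  ultimately have "2 * (?a * ?c) < markov_h * ?b * (?a * ?c)" by linarith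
  then show "2 < markov_h * ?b" using pos by (simp add: mult_less_cancel_right_pos)
qed

text \<open>Rescaled by half the Markov constant, the values become super-multiplicative along
  the tree, which forces exponential growth in the depth.\<close>

definition scaled_E :: "int \<times> int \<Rightarrow> real" where
  "scaled_E x = markov_h / 2 * E x"

definition growth_base :: real where
  "growth_base = min (scaled_E (1, 0)) (scaled_E (0, 1))"

lemma growth_base_gt_1: "1 < growth_base"
  using markov_h_root_gt_2 unfolding growth_base_def scaled_E_def by auto

lemma scaled_E_pos: "0 < scaled_E x"
  unfolding scaled_E_def using markov_h_pos E_pos[of x] by simp

lemma scaled_E_supermult: "sb_pair u v \<Longrightarrow> scaled_E u * scaled_E v \<le> scaled_E (u + v)"
  using mult_left_mono[OF markov_h_product_le, of u v "markov_h / 2"] markov_h_pos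
  by (simp add: scaled_E_def algebra_simps)

lemma scaled_E_growth:
  "sb_pair u v \<Longrightarrow> growth_base powr coord_sum u \<le> scaled_E u \<and> growth_base powr coord_sum v \<le> scaled_E v"
proof (induction rule: sb_pair.induct)
  case root
  show ?case using growth_base_gt_1 by (simp add: coord_sum_def growth_base_def)
next
  case (left u v)
  have "growth_base powr coord_sum (u + v) \<le> scaled_E u * scaled_E v"
    using left.IH scaled_E_pos[of u] unfolding coord_sum_add of_int_add powr_add
    by (intro mult_mono) auto
  then show ?case using scaled_E_supermult[OF left.hyps] left.IH by simp
next
  case (right u v)
  have "growth_base powr coord_sum (u + v) \<le> scaled_E u * scaled_E v"
    using right.IH scaled_E_pos[of u] unfolding coord_sum_add of_int_add powr_add
    by (intro mult_mono) auto
  then show ?case using scaled_E_supermult[OF right.hyps] right.IH by simp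
qed

lemma scaled_E_growth_sum: "sb_pair u v \<Longrightarrow> growth_base powr coord_sum (u + v) \<le> scaled_E (u + v)"
  using scaled_E_growth[OF sb_pair.left] by simp

lemma coord_sum_le_log:
  assumes "growth_base powr coord_sum x \<le> scaled_E x"
  shows "coord_sum x \<le> ln (scaled_E x) / ln growth_base"
proof -
  have "coord_sum x * ln growth_base \<le> ln (scaled_E x)"
    using assms growth_base_gt_1 scaled_E_pos[of x] ln_le_cancel_iff[of "growth_base powr coord_sum x"]
    by simp
  then show ?thesis using growth_base_gt_1 by (simp add: field_simps)
qed

definition depth_const :: real where
  "depth_const = 2 / ln growth_base"

lemma depth_const_pos: "0 < depth_const"
  unfolding depth_const_def using growth_base_gt_1 by simp

lemma small_weight_times_depth:
  assumes "growth_base powr coord_sum x \<le> scaled_E x" "0 \<le> p" "p \<le> 2 / (scaled_E x)\<^sup>2"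
  shows "p * coord_sum x \<le> depth_const / scaled_E x"
proof -
  have Y: "0 < scaled_E x" by (rule scaled_E_pos)
  have lnb: "0 < ln growth_base" using growth_base_gt_1 by simp
  have "ln (scaled_E x) \<le> scaled_E x" using ln_le_minus_one[OF Y] by simp
  then have "coord_sum x \<le> scaled_E x / ln growth_base"
    using coord_sum_le_log[OF assms(1)] lnb by (meson divide_right_mono less_imp_le order_trans)
  then have "p * coord_sum x \<le> p * (scaled_E x / ln growth_base)"
    using assms(2) by (rule mult_left_mono)
  also have "\<dots> \<le> 2 / (scaled_E x)\<^sup>2 * (scaled_E x / ln growth_base)"
    using assms(3) Y lnb by (intro mult_right_mono) auto
  also have "\<dots> = depth_const / scaled_E x"
    unfolding depth_const_def using Y by (simp add: field_simps power2_eq_square)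
  finally show ?thesis .
qed

definition E_root_min :: real where
  "E_root_min = min (E (1, 0)) (E (0, 1))"

lemma E_root_min_pos: "0 < E_root_min"
  unfolding E_root_min_def using E_pos by simp

lemma E_root_min_le: "sb_pair u v \<Longrightarrow> E_root_min \<le> E u \<and> E_root_min \<le> E v"
  by (induction rule: sb_pair.induct) (use summands_le in \<open>force simp: E_root_min_def\<close>)+

lemma E_root_min_le_sum: "sb_pair u v \<Longrightarrow> E_root_min \<le> E (u + v)"
  using E_root_min_le summands_le(1) by fastforce

definition weight :: "int \<times> int \<Rightarrow> int \<times> int \<Rightarrow> real" where
  "weight x y = 2 * (E x)\<^sup>2 / ((E x)\<^sup>2 + (E y)\<^sup>2)"

lemma weight_nonneg: "0 \<le> weight x y"
  unfolding weight_def by simp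

lemma weight_sum: "weight x y + weight y x = 2"
proof -
  have D: "(E x)\<^sup>2 + (E y)\<^sup>2 \<noteq> 0" using E_pos[of x] by (simp add: add_pos_nonneg)
  have "weight x y + weight y x = 2 * ((E x)\<^sup>2 + (E y)\<^sup>2) / ((E x)\<^sup>2 + (E y)\<^sup>2)"
    unfolding weight_def by (simp add: algebra_simps add_divide_distrib)
  also have "\<dots> = 2" using D by (rule nonzero_mult_div_cancel_right)
  finally show ?thesis .
qed

lemma weight_swap: "weight y x = 2 - weight x y"
  using weight_sum[of x y] by simp

lemma weight_le_2: "weight x y \<le> 2"
  using weight_sum[of x y] weight_nonneg[of y x] by simp

lemma weight_small:
  assumes "sb_pair u v"
  shows "weight u (u + v) \<le> 2 / (scaled_E v)\<^sup>2" "weight v (u + v) \<le> 2 / (scaled_E u)\<^sup>2"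
proof -
  have "weight x (u + v) \<le> 2 / (scaled_E y)\<^sup>2"
    if xy: "E x * scaled_E y \<le> E (u + v)" for x y
  proof -
    have pos: "0 < E x" "0 < scaled_E y" "0 < E (u + v)" using E_pos scaled_E_pos by auto
    have "weight x (u + v) \<le> 2 * (E x)\<^sup>2 / (E (u + v))\<^sup>2"
      unfolding weight_def using pos by (intro divide_left_mono) (auto simp: add_pos_pos)
    also have "\<dots> \<le> 2 * (E x)\<^sup>2 / (E x * scaled_E y)\<^sup>2"
      using xy pos by (intro divide_left_mono power_mono) auto
    also have "\<dots> = 2 / (scaled_E y)\<^sup>2" using pos by (simp add: power_mult_distrib)
    finally show ?thesis .
  qed
  moreover have "E u * scaled_E v \<le> E (u + v)" "E v * scaled_E u \<le> E (u + v)"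
    using markov_h_product_le[OF assms] by (simp_all add: scaled_E_def algebra_simps)
  ultimately show "weight u (u + v) \<le> 2 / (scaled_E v)\<^sup>2" "weight v (u + v) \<le> 2 / (scaled_E u)\<^sup>2"
    by blast+
qed

end


section \<open>A perturbed averaging recursion on the Stern-Brocot tree\<close>

lemma powr_le_scaled_powr:
  fixes e e0 p q :: real
  assumes "0 < e0" "e0 \<le> e" "p \<le> q"
  shows "e powr p \<le> e0 powr (p - q) * e powr q"
proof -
  have "e powr (p - q) \<le> e0 powr (p - q)" using assms by (intro powr_mono2') auto
  then have "e powr (p - q) * e powr q \<le> e0 powr (p - q) * e powr q" by (rule mult_right_mono) simp
  then show ?thesis by (simp flip: powr_add)
qed

lemma exp_product_step:
  fixes P P' c g g' w :: real
  assumes "P + c \<le> P'" "0 \<le> P" "0 \<le> c" "g + w \<le> g'" "0 \<le> w" "0 \<le> g'"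
  shows "P * exp g * (1 + w) + c \<le> P' * exp g'"
proof -
  have "exp g * (1 + w) \<le> exp g * exp w"
    using assms(5) by (intro mult_left_mono) auto
  also have "\<dots> \<le> exp g'" using assms(4) by (simp flip: exp_add)
  finally have "P * exp g * (1 + w) \<le> P * exp g'"
    using assms(2) by (simp add: mult_left_mono mult.assoc)
  moreover have "c \<le> c * exp g'" using assms(3,6) by (simp add: mult_le_cancel_left1)
  ultimately have "P * exp g * (1 + w) + c \<le> (P + c) * exp g'" by (simp add: algebra_simps)
  also have "\<dots> \<le> P' * exp g'" using assms(1) by (intro mult_right_mono) auto
  finally show ?thesis .
qed

lemma bound_step_sum:
  fixes X a b F K K' c w x y :: real
  assumes "\<bar>X\<bar> \<le> b + a + F" "a \<le> K * x" "b \<le> K * y" "F \<le> c" "K * (1 + w) + c \<le> K'"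
    and "0 \<le> w" "0 \<le> K" "0 \<le> c" "1 \<le> x" "1 \<le> y"
  shows "\<bar>X\<bar> \<le> K' * (x + y)"
proof -
  have "K \<le> K * (1 + w)" using assms(6,7) by (simp add: mult_le_cancel_left1)
  then have "(K + c) * (x + y) \<le> K' * (x + y)" using assms(5,9,10) by (intro mult_right_mono) auto
  moreover have "c \<le> c * (x + y)" using assms(8-10) by (simp add: mult_le_cancel_left1)
  ultimately show ?thesis using assms(1-4) by (simp add: algebra_simps)
qed

lemma bound_step_weighted:
  fixes X a b F K K' c p x y :: real
  assumes "\<bar>X\<bar> \<le> b + p * a + F" "a \<le> K * x" "b \<le> K * y" "F \<le> c" "K * (1 + p * x) + c \<le> K'"
    and "0 \<le> p" "0 \<le> K" "0 \<le> c" "0 \<le> x" "1 \<le> y"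
  shows "\<bar>X\<bar> \<le> K' * y"
proof -
  have "p * a \<le> p * (K * x)" using assms(2,6) by (rule mult_left_mono)
  also have "\<dots> \<le> p * (K * x) * y"
    using mult_left_mono[OF assms(10), of "p * (K * x)"] assms(6,7,9) by simp
  finally have "\<bar>X\<bar> \<le> K * y + K * p * x * y + c * y"
    using assms(1,3,4,8,10) mult_left_mono[of 1 y c] by (simp add: ac_simps)
  also have "\<dots> = (K * (1 + p * x) + c) * y" by (simp add: algebra_simps)
  also have "\<dots> \<le> K' * y" using assms(5,10) by (intro mult_right_mono) auto
  finally show ?thesis .
qed

lemma abs_add_weighted_le:
  fixes a b d q :: real
  assumes "\<bar>q - 1\<bar> \<le> 1"
  shows "\<bar>a + (q - 1) * b + d\<bar> \<le> \<bar>a\<bar> + \<bar>b\<bar> + \<bar>d\<bar>"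
proof -
  have "\<bar>(q - 1) * b\<bar> \<le> \<bar>b\<bar>" using assms by (simp add: abs_mult mult_left_le_one_le)
  then show ?thesis by linarith
qed

lemma abs_diff_weighted_le:
  fixes a b d p :: real
  assumes "0 \<le> p"
  shows "\<bar>a - p * b + d\<bar> \<le> \<bar>a\<bar> + p * \<bar>b\<bar> + \<bar>d\<bar>"
proof -
  have "\<bar>p * b\<bar> = p * \<bar>b\<bar>" using assms by (simp add: abs_mult)
  then show ?thesis by linarith
qed

lemma square_bound_step:
  fixes a K K' s s' z W :: real
  assumes "0 \<le> K" "K \<le> K'" "s + 1 \<le> s'" "0 \<le> s" "z \<le> s" "W \<le> a + K * s\<^sup>2 + K * z"
  shows "W \<le> a + K' * s'\<^sup>2"
proof -
  have "W \<le> a + K * (s\<^sup>2 + s)"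
    using assms(6) mult_left_mono[OF assms(5,1)] by (simp add: algebra_simps)
  also have "K * (s\<^sup>2 + s) \<le> K * s'\<^sup>2"
  proof -
    have "s\<^sup>2 + s \<le> (s + 1)\<^sup>2" using assms(4) by (simp add: power2_eq_square algebra_simps)
    also have "\<dots> \<le> s'\<^sup>2" using assms(3,4) by (intro power_mono) auto
    finally show ?thesis using assms(1) by (rule mult_left_mono)
  qed
  also have "K * s'\<^sup>2 \<le> K' * s'\<^sup>2" using assms(2) by (intro mult_right_mono) auto
  finally show ?thesis by simp
qed

locale averaging_recursion = ptolemy_tree +
  fixes U :: "int \<times> int \<Rightarrow> real" and C \<eta> :: real
  assumes U_uminus: "\<And>x. U (- x) = U x"
    and defect_bound: "\<And>u v. sb_pair u v \<Longrightarrow>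
      \<bar>U (u - v) + U (u + v) - (weight u v * U u + weight v u * U v)\<bar> \<le> C * E (u + v) powr \<eta>"
    and C_nonneg: "0 \<le> C" and eta_nonneg: "0 \<le> \<eta>"
begin

definition defect :: "int \<times> int \<Rightarrow> int \<times> int \<Rightarrow> real" where
  "defect u v = U (u - v) + U (u + v) - (weight u v * U u + weight v u * U v)"

definition jump_fst :: "int \<times> int \<Rightarrow> int \<times> int \<Rightarrow> real" where
  "jump_fst u v = U (u + v) - U u"

definition jump_snd :: "int \<times> int \<Rightarrow> int \<times> int \<Rightarrow> real" where
  "jump_snd u v = U (u + v) - U v"

lemma jumps_left_child:
  "jump_fst u (u + v) = jump_snd u v + (weight (u + v) u - 1) * jump_fst u v + defect u (u + v)"
  "jump_snd u (u + v) = jump_snd u v - weight u (u + v) * jump_fst u v + defect u (u + v)"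
  unfolding jump_fst_def jump_snd_def defect_def weight_swap[of u "u + v"]
  by (simp_all add: U_uminus algebra_simps)

lemma jumps_right_child:
  "jump_fst (u + v) v = jump_fst u v - weight v (u + v) * jump_snd u v + defect (u + v) v"
  "jump_snd (u + v) v = jump_fst u v + (weight (u + v) v - 1) * jump_snd u v + defect (u + v) v"
  unfolding jump_fst_def jump_snd_def defect_def weight_swap[of v "u + v"]
  by (simp_all add: algebra_simps)

lemma abs_weight_minus_1: "\<bar>weight x y - 1\<bar> \<le> 1"
  using weight_nonneg[of x y] weight_le_2[of x y] by simp

text \<open>The jumps are controlled by a bound that grows by the factor 1 + weight * depth
  at each step.  Its exponential part is a potential: it increases by at least
  depth_const / scaled_E of the unchanged vertex, yet stays in [0, exponent_max] because
  1 / scaled_E decays geometrically along the tree; geom_tail n is minus the tail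
  sum of growth_base^(-k) over k >= n.\<close>

definition geom_tail :: "real \<Rightarrow> real" where
  "geom_tail n = - (growth_base powr (1 - n)) / (growth_base - 1)"

definition exponent_max :: real where
  "exponent_max = depth_const * (1 / (growth_base - 1) + 2)"

definition jump_exponent :: "int \<times> int \<Rightarrow> int \<times> int \<Rightarrow> real" where
  "jump_exponent u v =
     depth_const * (geom_tail (coord_sum (u + v)) - 1 / scaled_E u - 1 / scaled_E v) + exponent_max"

definition jump_root :: real where
  "jump_root = max \<bar>jump_fst (1, 0) (0, 1)\<bar> \<bar>jump_snd (1, 0) (0, 1)\<bar>"

definition jump_bound_base :: "int \<times> int \<Rightarrow> int \<times> int \<Rightarrow> real" where
  "jump_bound_base u v = jump_root + C * coord_sum (u + v) * E (u + v) powr \<eta>"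

definition jump_bound :: "int \<times> int \<Rightarrow> int \<times> int \<Rightarrow> real" where
  "jump_bound u v = jump_bound_base u v * exp (jump_exponent u v)"

lemma geom_tail_nonpos: "geom_tail n \<le> 0"
  unfolding geom_tail_def using growth_base_gt_1 by (simp add: divide_nonpos_pos)

lemma geom_tail_ge: "1 \<le> n \<Longrightarrow> - 1 / (growth_base - 1) \<le> geom_tail n"
  using powr_mono[of "1 - n" 0 growth_base] growth_base_gt_1
  unfolding geom_tail_def by (simp add: divide_right_mono)

lemma geom_tail_increment:
  assumes "n + 1 \<le> m"
  shows "growth_base powr (- n) \<le> geom_tail m - geom_tail n"
proof -
  have b: "0 < growth_base - 1" using growth_base_gt_1 by simp
  have "growth_base powr (1 - m) \<le> growth_base powr (- n)"
    using assms growth_base_gt_1 by (intro powr_mono) auto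
  then have "(growth_base powr (1 - n) - growth_base powr (- n)) / (growth_base - 1)
      \<le> (growth_base powr (1 - n) - growth_base powr (1 - m)) / (growth_base - 1)"
    using b by (intro divide_right_mono) auto
  moreover have "(growth_base powr (1 - n) - growth_base powr (- n)) / (growth_base - 1)
      = growth_base powr (- n)"
    using b powr_add[of growth_base 1 "- n"] growth_base_gt_1 by (simp add: field_simps)
  moreover have "(growth_base powr (1 - n) - growth_base powr (1 - m)) / (growth_base - 1)
      = geom_tail m - geom_tail n"
    unfolding geom_tail_def by (simp add: diff_divide_distrib)
  ultimately show ?thesis by simp
qed

lemma inverse_scaled_E_le:
  assumes "growth_base powr coord_sum x \<le> scaled_E x" "1 \<le> coord_sum x"
  shows "1 / scaled_E x \<le> growth_base powr (- coord_sum x)" "1 / scaled_E x \<le> 1"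
proof -
  have p: "0 < growth_base powr coord_sum x" using growth_base_gt_1 by simp
  have "1 / scaled_E x \<le> 1 / growth_base powr coord_sum x"
    using assms(1) p scaled_E_pos[of x] by (intro divide_left_mono) auto
  then show "1 / scaled_E x \<le> growth_base powr (- coord_sum x)" by (simp add: powr_minus_divide)
  have "1 \<le> growth_base powr coord_sum x"
    using assms(2) growth_base_gt_1 powr_mono[of 0 "coord_sum x" growth_base] by simp
  then show "1 / scaled_E x \<le> 1" using assms(1) by simp
qed

lemma inverse_scaled_E_pair_le:
  assumes "sb_pair u v"
  shows "1 / scaled_E u \<le> 1" "1 / scaled_E v \<le> 1"
  using inverse_scaled_E_le(2) scaled_E_growth[OF assms] sb_pair_coord_sum_pos[OF assms] by auto

lemma jump_exponent_bounds:
  assumes "sb_pair u v"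
  shows "0 \<le> jump_exponent u v" "jump_exponent u v \<le> exponent_max"
proof -
  have "- (1 / (growth_base - 1) + 2) \<le> geom_tail (coord_sum (u + v)) - 1 / scaled_E u - 1 / scaled_E v"
    using inverse_scaled_E_pair_le[OF assms] geom_tail_ge[of "coord_sum (u + v)"]
      sb_pair_coord_sum_pos[OF assms] by simp
  from mult_left_mono[OF this less_imp_le[OF depth_const_pos]]
  show "0 \<le> jump_exponent u v" unfolding jump_exponent_def exponent_max_def
    by (simp add: algebra_simps)
  have "geom_tail (coord_sum (u + v)) - 1 / scaled_E u - 1 / scaled_E v \<le> 0"
    using geom_tail_nonpos[of "coord_sum (u + v)"] scaled_E_pos[of u] scaled_E_pos[of v]
      divide_pos_pos[of 1 "scaled_E u"] divide_pos_pos[of 1 "scaled_E v"] by linarith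
  then show "jump_exponent u v \<le> exponent_max"
    unfolding jump_exponent_def using depth_const_pos by (simp add: mult_nonneg_nonpos)
qed

lemma inverse_scaled_E_sum_le:
  "sb_pair u v \<Longrightarrow> 1 / scaled_E (u + v) \<le> growth_base powr (- coord_sum (u + v))"
  using inverse_scaled_E_le(1)[OF scaled_E_growth_sum] sb_pair_coord_sum_pos by fastforce

lemma jump_exponent_left:
  assumes "sb_pair u v"
  shows "jump_exponent u v + depth_const / scaled_E v \<le> jump_exponent u (u + v)"
proof -
  have "growth_base powr (- coord_sum (u + v))
      \<le> geom_tail (coord_sum (u + (u + v))) - geom_tail (coord_sum (u + v))"
    using geom_tail_increment[of "coord_sum (u + v)" "coord_sum (u + (u + v))"]
      sb_pair_coord_sum_pos[OF assms] by simp
  then have "1 / scaled_E v \<le> geom_tail (coord_sum (u + (u + v))) - geom_tail (coord_sum (u + v))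
      - 1 / scaled_E (u + v) + 1 / scaled_E v"
    using inverse_scaled_E_sum_le[OF assms] by simp
  from mult_left_mono[OF this less_imp_le[OF depth_const_pos]]
  show ?thesis
    unfolding jump_exponent_def right_diff_distrib distrib_left times_divide_eq_right mult_1_right
    by linarith
qed

lemma jump_exponent_right:
  assumes "sb_pair u v"
  shows "jump_exponent u v + depth_const / scaled_E u \<le> jump_exponent (u + v) v"
proof -
  have "growth_base powr (- coord_sum (u + v))
      \<le> geom_tail (coord_sum (u + v + v)) - geom_tail (coord_sum (u + v))"
    using geom_tail_increment[of "coord_sum (u + v)" "coord_sum (u + v + v)"]
      sb_pair_coord_sum_pos[OF assms] by simp
  then have "1 / scaled_E u \<le> geom_tail (coord_sum (u + v + v)) - geom_tail (coord_sum (u + v))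
      - 1 / scaled_E (u + v) + 1 / scaled_E u"
    using inverse_scaled_E_sum_le[OF assms] by simp
  from mult_left_mono[OF this less_imp_le[OF depth_const_pos]]
  show ?thesis
    unfolding jump_exponent_def right_diff_distrib distrib_left times_divide_eq_right mult_1_right
    by linarith
qed

lemma jump_bound_base_nonneg: "sb_pair u v \<Longrightarrow> 0 \<le> jump_bound_base u v"
  unfolding jump_bound_base_def jump_root_def using C_nonneg sb_pair_coord_sum_pos[of u v]
  by (intro add_nonneg_nonneg mult_nonneg_nonneg) auto

lemma jump_bound_base_increment:
  assumes "coord_sum x + 1 \<le> coord_sum y" "0 \<le> coord_sum x" "E x \<le> E y"
  shows "jump_root + C * coord_sum x * E x powr \<eta> + C * E y powr \<eta>
    \<le> jump_root + C * coord_sum y * E y powr \<eta>"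
proof -
  have "C * coord_sum x * E x powr \<eta> \<le> C * coord_sum x * E y powr \<eta>"
    using assms(2,3) eta_nonneg C_nonneg E_pos[of x]
    by (intro mult_left_mono powr_mono2) auto
  also have "\<dots> + C * E y powr \<eta> = C * (coord_sum x + 1) * E y powr \<eta>"
    by (simp add: algebra_simps)
  also have "\<dots> \<le> C * coord_sum y * E y powr \<eta>"
    using assms(1) C_nonneg by (intro mult_right_mono mult_left_mono) auto
  finally show ?thesis by simp
qed

lemma jump_bound_base_left:
  assumes "sb_pair u v"
  shows "jump_bound_base u v + C * E (u + (u + v)) powr \<eta> \<le> jump_bound_base u (u + v)"
  unfolding jump_bound_base_def
  using sb_pair_coord_sum_pos[OF assms] summands_le(2)[OF sb_pair.left[OF assms]]
  by (intro jump_bound_base_increment) auto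

lemma jump_bound_base_right:
  assumes "sb_pair u v"
  shows "jump_bound_base u v + C * E (u + v + v) powr \<eta> \<le> jump_bound_base (u + v) v"
  unfolding jump_bound_base_def
  using sb_pair_coord_sum_pos[OF assms] summands_le(1)[OF sb_pair.right[OF assms]]
  by (intro jump_bound_base_increment) auto

lemma jump_bound_left:
  assumes "sb_pair u v"
  shows "jump_bound u v * (1 + weight u (u + v) * coord_sum v) + C * E (u + (u + v)) powr \<eta>
    \<le> jump_bound u (u + v)"
proof -
  have "weight u (u + v) * coord_sum v \<le> depth_const / scaled_E v"
    using small_weight_times_depth[OF conjunct2[OF scaled_E_growth[OF assms]] weight_nonneg
        weight_small(1)[OF assms]] .
  then have "jump_exponent u v + weight u (u + v) * coord_sum v \<le> jump_exponent u (u + v)"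
    using jump_exponent_left[OF assms] by simp
  then show ?thesis
    unfolding jump_bound_def
    using exp_product_step[OF _ jump_bound_base_nonneg[OF assms] _ _ _
        jump_exponent_bounds(1)[OF sb_pair.left[OF assms]]]
      jump_bound_base_left[OF assms] C_nonneg weight_nonneg sb_pair_coord_sum_pos[OF assms]
    by simp
qed

lemma jump_bound_right:
  assumes "sb_pair u v"
  shows "jump_bound u v * (1 + weight v (u + v) * coord_sum u) + C * E (u + v + v) powr \<eta>
    \<le> jump_bound (u + v) v"
proof -
  have "weight v (u + v) * coord_sum u \<le> depth_const / scaled_E u"
    using small_weight_times_depth[OF conjunct1[OF scaled_E_growth[OF assms]] weight_nonneg
        weight_small(2)[OF assms]] .
  then have "jump_exponent u v + weight v (u + v) * coord_sum u \<le> jump_exponent (u + v) v"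
    using jump_exponent_right[OF assms] by simp
  then show ?thesis
    unfolding jump_bound_def
    using exp_product_step[OF _ jump_bound_base_nonneg[OF assms] _ _ _
        jump_exponent_bounds(1)[OF sb_pair.right[OF assms]]]
      jump_bound_base_right[OF assms] C_nonneg weight_nonneg sb_pair_coord_sum_pos[OF assms]
    by simp
qed

lemma jump_bound_nonneg: "sb_pair u v \<Longrightarrow> 0 \<le> jump_bound u v"
  unfolding jump_bound_def using jump_bound_base_nonneg by simp

lemma jump_bound_mono_left:
  assumes "sb_pair u v"
  shows "jump_bound u v \<le> jump_bound u (u + v)"
proof -
  have "jump_bound u v \<le> jump_bound u v * (1 + weight u (u + v) * coord_sum v)"
    using jump_bound_nonneg[OF assms] weight_nonneg sb_pair_coord_sum_pos[OF assms]
    by (simp add: mult_le_cancel_left1)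
  also have "\<dots> \<le> jump_bound u (u + v)"
    using jump_bound_left[OF assms] mult_nonneg_nonneg[OF C_nonneg powr_ge_zero[of "E (u + (u + v))" \<eta>]]
    by linarith
  finally show ?thesis .
qed

lemma jump_bound_mono_right:
  assumes "sb_pair u v"
  shows "jump_bound u v \<le> jump_bound (u + v) v"
proof -
  have "jump_bound u v \<le> jump_bound u v * (1 + weight v (u + v) * coord_sum u)"
    using jump_bound_nonneg[OF assms] weight_nonneg sb_pair_coord_sum_pos[OF assms]
    by (simp add: mult_le_cancel_left1)
  also have "\<dots> \<le> jump_bound (u + v) v"
    using jump_bound_right[OF assms] mult_nonneg_nonneg[OF C_nonneg powr_ge_zero[of "E (u + v + v)" \<eta>]]
    by linarith
  finally show ?thesis .
qed

lemma jump_bound_root: "jump_root \<le> jump_bound (1, 0) (0, 1)"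
proof -
  have "jump_root \<le> jump_bound_base (1, 0) (0, 1)"
    unfolding jump_bound_base_def using C_nonneg by (simp add: coord_sum_def)
  also have "\<dots> \<le> jump_bound_base (1, 0) (0, 1) * exp (jump_exponent (1, 0) (0, 1))"
    using jump_exponent_bounds(1)[OF sb_pair.root] jump_bound_base_nonneg[OF sb_pair.root]
    by (simp add: mult_le_cancel_left1)
  finally show ?thesis unfolding jump_bound_def .
qed

lemma abs_defect_le: "sb_pair u v \<Longrightarrow> \<bar>defect u v\<bar> \<le> C * E (u + v) powr \<eta>"
  unfolding defect_def by (rule defect_bound)

lemma jump_bounds:
  "sb_pair u v \<Longrightarrow>
    \<bar>jump_fst u v\<bar> \<le> jump_bound u v * coord_sum v \<and> \<bar>jump_snd u v\<bar> \<le> jump_bound u v * coord_sum u"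
proof (induction rule: sb_pair.induct)
  case root
  show ?case using jump_bound_root unfolding jump_root_def by (simp add: coord_sum_def)
next
  case (left u v)
  have c: "0 \<le> C * E (u + (u + v)) powr \<eta>" using C_nonneg by simp
  note K = jump_bound_left[OF left.hyps] and D = abs_defect_le[OF sb_pair.left[OF left.hyps]]
  note IH = left.IH[THEN conjunct1] left.IH[THEN conjunct2]
  note pos = sb_pair_coord_sum_pos[OF left.hyps]
  have "\<bar>jump_fst u (u + v)\<bar> \<le> jump_bound u (u + v) * (coord_sum u + coord_sum v)"
    using bound_step_sum[OF abs_add_weighted_le[OF abs_weight_minus_1] IH D K
        _ jump_bound_nonneg[OF left.hyps] c] pos weight_nonneg[of u "u + v"]
    unfolding jumps_left_child(1) by (simp add: add.commute)
  moreover have "\<bar>jump_snd u (u + v)\<bar> \<le> jump_bound u (u + v) * coord_sum u"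
    using bound_step_weighted[OF abs_diff_weighted_le[OF weight_nonneg] IH D K
        weight_nonneg jump_bound_nonneg[OF left.hyps] c] pos
    unfolding jumps_left_child(2) by simp
  ultimately show ?case by simp
next
  case (right u v)
  have c: "0 \<le> C * E (u + v + v) powr \<eta>" using C_nonneg by simp
  note K = jump_bound_right[OF right.hyps] and D = abs_defect_le[OF sb_pair.right[OF right.hyps]]
  note IH = right.IH[THEN conjunct1] right.IH[THEN conjunct2]
  note pos = sb_pair_coord_sum_pos[OF right.hyps]
  have "\<bar>jump_fst (u + v) v\<bar> \<le> jump_bound (u + v) v * coord_sum v"
    using bound_step_weighted[OF abs_diff_weighted_le[OF weight_nonneg] IH(2,1) D K
        weight_nonneg jump_bound_nonneg[OF right.hyps] c] pos
    unfolding jumps_right_child(1) by simp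
  moreover have "\<bar>jump_snd (u + v) v\<bar> \<le> jump_bound (u + v) v * (coord_sum u + coord_sum v)"
    using bound_step_sum[OF abs_add_weighted_le[OF abs_weight_minus_1] IH(2,1) D K
        _ jump_bound_nonneg[OF right.hyps] c] pos weight_nonneg[of v "u + v"]
    unfolding jumps_right_child(2) by simp
  ultimately show ?case by simp
qed

definition U_root :: real where
  "U_root = max \<bar>U (1, 0)\<bar> \<bar>U (0, 1)\<bar>"

lemma U_bounds:
  "sb_pair u v \<Longrightarrow> \<bar>U u\<bar> \<le> U_root + jump_bound u v * (real_of_int (coord_sum (u + v)))\<^sup>2 \<and>
     \<bar>U v\<bar> \<le> U_root + jump_bound u v * (real_of_int (coord_sum (u + v)))\<^sup>2"
proof (induction rule: sb_pair.induct)
  case root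
  then show ?case
    using jump_bound_nonneg[OF sb_pair.root] unfolding U_root_def by (simp add: add_increasing2)
next
  case (left u v)
  note pos = sb_pair_coord_sum_pos[OF left.hyps]
  note step = square_bound_step[OF jump_bound_nonneg[OF left.hyps] jump_bound_mono_left[OF left.hyps],
      of "coord_sum (u + v)" "coord_sum (u + (u + v))"]
  have "\<bar>U (u + v)\<bar> \<le> \<bar>U u\<bar> + \<bar>jump_fst u v\<bar>" unfolding jump_fst_def by linarith
  then have "\<bar>U (u + v)\<bar> \<le> U_root + jump_bound u v * (real_of_int (coord_sum (u + v)))\<^sup>2 + jump_bound u v * coord_sum v"
    using left.IH jump_bounds[OF left.hyps] by linarith
  then show ?case using step[of "coord_sum v"] step[of 0 "\<bar>U u\<bar>"] left.IH pos by simp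
next
  case (right u v)
  note pos = sb_pair_coord_sum_pos[OF right.hyps]
  note step = square_bound_step[OF jump_bound_nonneg[OF right.hyps] jump_bound_mono_right[OF right.hyps],
      of "coord_sum (u + v)" "coord_sum (u + v + v)"]
  have "\<bar>U (u + v)\<bar> \<le> \<bar>U v\<bar> + \<bar>jump_snd u v\<bar>" unfolding jump_snd_def by linarith
  then have "\<bar>U (u + v)\<bar> \<le> U_root + jump_bound u v * (real_of_int (coord_sum (u + v)))\<^sup>2 + jump_bound u v * coord_sum u"
    using right.IH jump_bounds[OF right.hyps] by linarith
  then show ?case using step[of "coord_sum u"] step[of 0 "\<bar>U v\<bar>"] right.IH pos by simp
qed

lemma U_sum_bound:
  assumes "sb_pair u v"
  shows "\<bar>U (u + v)\<bar> \<le> U_root + 2 * jump_bound u v * (real_of_int (coord_sum (u + v)))\<^sup>2"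
proof -
  let ?s = "real_of_int (coord_sum (u + v))"
  have pos: "1 \<le> coord_sum u" "1 \<le> coord_sum v" using sb_pair_coord_sum_pos[OF assms] by auto
  have "\<bar>U (u + v)\<bar> \<le> \<bar>U u\<bar> + \<bar>jump_fst u v\<bar>" unfolding jump_fst_def by linarith
  also have "\<dots> \<le> U_root + jump_bound u v * ?s\<^sup>2 + jump_bound u v * coord_sum v"
    using U_bounds[OF assms] jump_bounds[OF assms] by linarith
  also have "jump_bound u v * coord_sum v \<le> jump_bound u v * ?s\<^sup>2"
  proof -
    have "coord_sum v \<le> ?s" using pos by simp
    also have "\<dots> \<le> ?s\<^sup>2" using pos by (simp add: power2_eq_square)
    finally show ?thesis using jump_bound_nonneg[OF assms] by (rule mult_left_mono)
  qed
  finally show ?thesis by simp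
qed

lemma U_sum_cubic_bound:
  assumes "sb_pair u v"
  shows "\<bar>U (u + v)\<bar>
    \<le> U_root + 2 * exp exponent_max * (jump_root + C * E (u + v) powr \<eta>) * real_of_int (coord_sum (u + v)) ^ 3"
proof -
  let ?s = "real_of_int (coord_sum (u + v))" and ?e = "E (u + v) powr \<eta>"
  have s: "1 \<le> ?s" using sb_pair_coord_sum_pos[OF assms] by simp
  have K: "jump_bound u v \<le> (jump_root + C * ?s * ?e) * exp exponent_max"
    unfolding jump_bound_def jump_bound_base_def[symmetric]
    using jump_bound_base_nonneg[OF assms] jump_exponent_bounds(2)[OF assms]
    by (intro mult_left_mono) auto
  have "jump_bound u v * ?s\<^sup>2 \<le> (jump_root + C * ?s * ?e) * exp exponent_max * ?s\<^sup>2"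
    using K by (intro mult_right_mono) auto
  also have "\<dots> = exp exponent_max * (jump_root * ?s\<^sup>2 + C * ?e * ?s ^ 3)"
    by (simp add: algebra_simps power2_eq_square power3_eq_cube)
  also have "\<dots> \<le> exp exponent_max * (jump_root * ?s ^ 3 + C * ?e * ?s ^ 3)"
    using s unfolding jump_root_def
    by (intro mult_left_mono add_right_mono) (auto simp: power2_eq_square power3_eq_cube)
  finally show ?thesis using U_sum_bound[OF assms] by (simp add: algebra_simps)
qed

lemma coord_sum_cube_le:
  assumes "0 < \<epsilon>"
  shows "\<exists>D>0. \<forall>u v. sb_pair u v \<longrightarrow> real_of_int (coord_sum (u + v)) ^ 3 \<le> D * E (u + v) powr \<epsilon>"
proof -
  define D0 where "D0 = 3 / (\<epsilon> * ln growth_base)"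
  have lnb: "0 < ln growth_base" using growth_base_gt_1 by simp
  have D0: "0 < D0" unfolding D0_def using assms lnb by simp
  have "real_of_int (coord_sum (u + v)) ^ 3 \<le> D0 ^ 3 * (markov_h / 2) powr \<epsilon> * E (u + v) powr \<epsilon>"
    if "sb_pair u v" for u v
  proof -
    let ?Y = "scaled_E (u + v)"
    have gs: "growth_base powr coord_sum (u + v) \<le> ?Y" using scaled_E_growth_sum[OF that] .
    have "1 \<le> growth_base powr coord_sum (u + v)"
      using growth_base_gt_1 sb_pair_coord_sum_pos[OF that] by (intro ge_one_powr_ge_zero) auto
    then have Y: "1 \<le> ?Y" using gs by simp
    have "coord_sum (u + v) \<le> ln ?Y / ln growth_base" by (rule coord_sum_le_log[OF gs])
    also have "\<dots> \<le> (?Y powr (\<epsilon> / 3) / (\<epsilon> / 3)) / ln growth_base"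
      using ln_powr_bound[OF Y, of "\<epsilon> / 3"] assms lnb by (intro divide_right_mono) auto
    also have "\<dots> = D0 * ?Y powr (\<epsilon> / 3)" unfolding D0_def using assms lnb by (simp add: field_simps)
    finally have "real_of_int (coord_sum (u + v)) ^ 3 \<le> (D0 * ?Y powr (\<epsilon> / 3)) ^ 3"
      using sb_pair_coord_sum_pos[OF that] by (intro power_mono) auto
    also have "\<dots> = D0 ^ 3 * ?Y powr \<epsilon>"
      using powr_power[of ?Y "\<epsilon> / 3" 3] scaled_E_pos[of "u + v"] by (simp add: power_mult_distrib)
    also have "\<dots> = D0 ^ 3 * (markov_h / 2) powr \<epsilon> * E (u + v) powr \<epsilon>"
      unfolding scaled_E_def using powr_mult[of "markov_h / 2" "E (u + v)" \<epsilon>] markov_h_pos E_pos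
      by (simp add: less_imp_le)
    finally show ?thesis .
  qed
  moreover have "0 < D0 ^ 3 * (markov_h / 2) powr \<epsilon>" using D0 markov_h_pos by simp
  ultimately show ?thesis by blast
qed

theorem U_growth:
  assumes "0 < \<epsilon>"
  shows "\<exists>M. \<forall>u v. sb_pair u v \<longrightarrow> \<bar>U (u + v)\<bar> \<le> M * E (u + v) powr (\<eta> + \<epsilon>)"
proof -
  obtain D where D: "0 < D"
    "\<And>u v. sb_pair u v \<Longrightarrow> real_of_int (coord_sum (u + v)) ^ 3 \<le> D * E (u + v) powr \<epsilon>"
    using coord_sum_cube_le[OF assms] by blast
  define A where "A = 2 * exp exponent_max * D"
  define M where "M = U_root * E_root_min powr (- (\<eta> + \<epsilon>))
    + A * (jump_root * E_root_min powr (- \<eta>) + C)"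
  have nonneg: "0 \<le> U_root" "0 \<le> jump_root" "0 \<le> A"
    unfolding U_root_def jump_root_def A_def using D(1) by auto
  have "\<bar>U (u + v)\<bar> \<le> M * E (u + v) powr (\<eta> + \<epsilon>)" if uv: "sb_pair u v" for u v
  proof -
    let ?e = "E (u + v)"
    note scale = powr_le_scaled_powr[OF E_root_min_pos E_root_min_le_sum[OF uv]]
    have "0 \<le> 2 * exp exponent_max * (jump_root + C * ?e powr \<eta>)"
      using nonneg C_nonneg by simp
    from mult_left_mono[OF D(2)[OF uv] this]
    have "\<bar>U (u + v)\<bar> \<le> U_root + 2 * exp exponent_max * (jump_root + C * ?e powr \<eta>) * (D * ?e powr \<epsilon>)"
      using U_sum_cubic_bound[OF uv] by linarith
    also have "\<dots> = U_root * ?e powr 0 + A * (jump_root * ?e powr \<epsilon> + C * ?e powr (\<eta> + \<epsilon>))"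
      using E_pos[of "u + v"] by (simp add: A_def algebra_simps powr_add)
    also have "\<dots> \<le> U_root * (E_root_min powr (0 - (\<eta> + \<epsilon>)) * ?e powr (\<eta> + \<epsilon>))
        + A * (jump_root * (E_root_min powr (\<epsilon> - (\<eta> + \<epsilon>)) * ?e powr (\<eta> + \<epsilon>)) + C * ?e powr (\<eta> + \<epsilon>))"
      using scale[of 0 "\<eta> + \<epsilon>"] scale[of \<epsilon> "\<eta> + \<epsilon>"] nonneg eta_nonneg assms
      by (intro add_mono mult_left_mono order_refl) auto
    also have "\<dots> = M * ?e powr (\<eta> + \<epsilon>)" by (simp add: M_def algebra_simps)
    finally show ?thesis .
  qed
  then show ?thesis by blast
qed

end


section \<open>The Grassmann algebra\<close>

lemma gsign_pm: "gsign B C = 1 \<or> gsign B C = -1"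
  unfolding gsign_def by (cases "even (card {(i, j). i \<in> B \<and> j \<in> C \<and> j < i})") auto

lemma gsign_abs [simp]: "\<bar>gsign B C\<bar> = 1"
  using gsign_pm[of B C] by auto

lemma gsign_empty_left [simp]: "gsign {} C = 1" unfolding gsign_def by simp
lemma gsign_empty_right [simp]: "gsign B {} = 1" unfolding gsign_def by simp

lemma gmul_outside: "\<not> A \<subseteq> {1..N} \<Longrightarrow> gmul N x y A = 0"
  unfolding gmul_def by simp

lemma gmul_inside: "A \<subseteq> {1..N} \<Longrightarrow> gmul N x y A = (\<Sum>B\<in>Pow A. gsign B (A - B) * x B * y (A - B))"
  unfolding gmul_def by simp

lemma gmul_body [simp]: "gmul N x y {} = x {} * y {}"
  unfolding gmul_def by simp

definition gmul_mixed :: "grass \<Rightarrow> grass \<Rightarrow> nat set \<Rightarrow> real" where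
  "gmul_mixed x y A = (\<Sum>B\<in>Pow A - {{}, A}. gsign B (A - B) * x B * y (A - B))"

lemma gmul_split:
  assumes "A \<subseteq> {1..N}" "A \<noteq> {}"
  shows "gmul N x y A = x {} * y A + x A * y {} + gmul_mixed x y A"
proof -
  have fin: "finite (Pow A)" using finite_subset[OF assms(1)] by simp
  have e: "{} \<in> Pow A" "A \<in> Pow A - {{}}" using assms by auto
  have "gmul N x y A = (\<Sum>B\<in>Pow A. gsign B (A - B) * x B * y (A - B))" using gmul_inside[OF assms(1)] .
  also have "\<dots> = gsign {} (A - {}) * x {} * y (A - {}) + (\<Sum>B\<in>Pow A - {{}}. gsign B (A - B) * x B * y (A - B))"
    by (rule sum.remove[OF fin e(1)])
  also have "(\<Sum>B\<in>Pow A - {{}}. gsign B (A - B) * x B * y (A - B)) =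
      gsign A (A - A) * x A * y (A - A) + (\<Sum>B\<in>Pow A - {{}} - {A}. gsign B (A - B) * x B * y (A - B))"
    by (rule sum.remove) (use fin e(2) in auto)
  also have "Pow A - {{}} - {A} = Pow A - {{}, A}" by auto
  finally show ?thesis unfolding gmul_mixed_def by simp
qed

lemma abs_gmul_mixed_le: "\<bar>gmul_mixed x y A\<bar> \<le> (\<Sum>B\<in>Pow A - {{}, A}. \<bar>x B\<bar> * \<bar>y (A - B)\<bar>)"
  unfolding gmul_mixed_def by (rule order_trans[OF sum_abs]) (simp add: abs_mult)

lemma abs_gmul_le: "\<bar>gmul N x y A\<bar> \<le> (\<Sum>B\<in>Pow A. \<bar>x B\<bar> * \<bar>y (A - B)\<bar>)"
proof (cases "A \<subseteq> {1..N}")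
  case True
  have "\<bar>\<Sum>B\<in>Pow A. gsign B (A - B) * x B * y (A - B)\<bar> \<le> (\<Sum>B\<in>Pow A. \<bar>gsign B (A - B) * x B * y (A - B)\<bar>)"
    by (rule sum_abs)
  also have "\<dots> = (\<Sum>B\<in>Pow A. \<bar>x B\<bar> * \<bar>y (A - B)\<bar>)" by (simp add: abs_mult)
  finally show ?thesis unfolding gmul_inside[OF True] .
next
  case False
  then show ?thesis by (simp add: gmul_outside sum_nonneg)
qed

lemma is_odd_body: "is_odd N x \<Longrightarrow> x {} = 0"
  unfolding is_odd_def by auto

lemma is_even_card_even: "is_even N x \<Longrightarrow> x B \<noteq> 0 \<Longrightarrow> even (card B)"
  unfolding is_even_def by auto

lemma card_inversions_sum:
  fixes B C :: "nat set"
  assumes "finite B" "finite C" "B \<inter> C = {}"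
  shows "card {(i, j). i \<in> B \<and> j \<in> C \<and> j < i} + card {(i, j). i \<in> C \<and> j \<in> B \<and> j < i} = card B * card C"
proof -
  let ?S1 = "{(i, j). i \<in> B \<and> j \<in> C \<and> j < i}"
  let ?S2 = "{(i, j). i \<in> C \<and> j \<in> B \<and> j < i}"
  let ?S2' = "{(i, j). i \<in> B \<and> j \<in> C \<and> i < j}"
  have fin: "finite (B \<times> C)" using assms by simp
  have s1: "?S1 \<subseteq> B \<times> C" and s2': "?S2' \<subseteq> B \<times> C" by auto
  have c2: "card ?S2 = card ?S2'"
  proof -
    have "?S2' = (\<lambda>(i,j). (j,i)) ` ?S2" by (auto simp: image_iff)
    moreover have "inj_on (\<lambda>(i,j). (j,i)) ?S2" by (auto simp: inj_on_def)
    ultimately show ?thesis by (simp add: card_image)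
  qed
  have un: "?S1 \<union> ?S2' = B \<times> C"
  proof
    show "B \<times> C \<subseteq> ?S1 \<union> ?S2'"
    proof
      fix p assume p: "p \<in> B \<times> C"
      obtain i j where ij: "p = (i,j)" by force
      have "i \<noteq> j" using p ij assms(3) by auto
      then have "j < i \<or> i < j" by arith
      then show "p \<in> ?S1 \<union> ?S2'" using p ij by auto
    qed
  qed auto
  have di: "?S1 \<inter> ?S2' = {}" by auto
  have "card (B \<times> C) = card ?S1 + card ?S2'"
    using card_Un_disjoint[of ?S1 ?S2'] finite_subset[OF s1 fin] finite_subset[OF s2' fin] un di by simp
  then show ?thesis using c2 by (simp add: card_cartesian_product)
qed

lemma gsign_swap_even:
  assumes "finite B" "finite C" "B \<inter> C = {}" "even (card B)"
  shows "gsign B C = gsign C B"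
proof -
  have "gsign B C * gsign C B = (-1) ^ (card B * card C)"
    unfolding gsign_def using card_inversions_sum[OF assms(1-3)] by (simp add: power_add[symmetric])
  also have "\<dots> = 1" using assms(4) by simp
  finally have p: "gsign B C * gsign C B = 1" .
  then show ?thesis using gsign_pm[of B C] gsign_pm[of C B] by auto
qed

lemma gmul_comm_even:
  assumes "is_even N x" "is_even N y"
  shows "gmul N x y = gmul N y x"
proof
  fix A
  show "gmul N x y A = gmul N y x A"
  proof (cases "A \<subseteq> {1..N}")
    case False then show ?thesis by (simp add: gmul_outside)
  next
    case True
    have finA: "finite A" using True finite_subset by blast
    have bij: "bij_betw (\<lambda>B. A - B) (Pow A) (Pow A)"
      by (rule bij_betw_byWitness[where f'="\<lambda>B. A - B"]) auto
    have "gmul N y x A = (\<Sum>B\<in>Pow A. gsign B (A - B) * y B * x (A - B))" using gmul_inside[OF True] .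
    also have "\<dots> = (\<Sum>B\<in>Pow A. gsign (A - B) (A - (A - B)) * y (A - B) * x (A - (A - B)))"
      using sum.reindex_bij_betw[OF bij, of "\<lambda>B. gsign B (A - B) * y B * x (A - B)"] by simp
    also have "\<dots> = (\<Sum>B\<in>Pow A. gsign B (A - B) * x B * y (A - B))"
    proof (rule sum.cong[OF refl])
      fix B assume "B \<in> Pow A"
      then have BA: "B \<subseteq> A" by simp
      have e: "A - (A - B) = B" using BA by auto
      show "gsign (A - B) (A - (A - B)) * y (A - B) * x (A - (A - B)) = gsign B (A - B) * x B * y (A - B)"
      proof (cases "x B = 0 \<or> y (A - B) = 0")
        case True then show ?thesis unfolding e by auto
      next
        case False
        then have "even (card B)" using is_even_card_even[OF assms(1)] by blast
        then have "gsign B (A - B) = gsign (A - B) B"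
          using gsign_swap_even[OF finite_subset[OF BA finA]] finA by auto
        then show ?thesis unfolding e by simp
      qed
    qed
    also have "\<dots> = gmul N x y A" using gmul_inside[OF True] by simp
    finally show ?thesis by simp
  qed
qed

lemma gmul_left_cancel:
  assumes "x {} \<noteq> 0" "\<And>A. \<not> A \<subseteq> {1..N} \<Longrightarrow> y A = 0" "\<And>A. \<not> A \<subseteq> {1..N} \<Longrightarrow> y' A = 0"
    and eq: "gmul N x y = gmul N x y'"
  shows "y = y'"
proof -
  have main: "\<forall>A. A \<subseteq> {1..N} \<longrightarrow> card A = n \<longrightarrow> y A = y' A" for n
  proof (induction n rule: less_induct)
    case (less n)
    show ?case
    proof (intro allI impI)
      fix A assume A: "A \<subseteq> {1..N}" "card A = n"
      have finA: "finite A" using A(1) finite_subset by blast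
      have r: "(\<Sum>B\<in>Pow A - {{}}. gsign B (A - B) * x B * y (A - B)) =
               (\<Sum>B\<in>Pow A - {{}}. gsign B (A - B) * x B * y' (A - B))"
      proof (rule sum.cong[OF refl])
        fix B assume B: "B \<in> Pow A - {{}}"
        have "A - B \<subset> A" using B by auto
        then have "card (A - B) < n" using finA A(2) psubset_card_mono by blast
        moreover have "A - B \<subseteq> {1..N}" using A(1) by auto
        ultimately have "y (A - B) = y' (A - B)" using less.IH by blast
        then show "gsign B (A - B) * x B * y (A - B) = gsign B (A - B) * x B * y' (A - B)" by simp
      qed
      have fin: "finite (Pow A)" using finA by simp
      have e: "{} \<in> Pow A" by simp
      have "gmul N x y A = x {} * y A + (\<Sum>B\<in>Pow A - {{}}. gsign B (A - B) * x B * y (A - B))"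
        unfolding gmul_inside[OF A(1)] using sum.remove[OF fin e, of "\<lambda>B. gsign B (A - B) * x B * y (A - B)"] by simp
      moreover have "gmul N x y' A = x {} * y' A + (\<Sum>B\<in>Pow A - {{}}. gsign B (A - B) * x B * y' (A - B))"
        unfolding gmul_inside[OF A(1)] using sum.remove[OF fin e, of "\<lambda>B. gsign B (A - B) * x B * y' (A - B)"] by simp
      moreover have "gmul N x y A = gmul N x y' A" using eq by simp
      ultimately have "x {} * y A = x {} * y' A" using r by linarith
      then show "y A = y' A" using assms(1) by simp
    qed
  qed
  show ?thesis
  proof
    fix A show "y A = y' A"
      using main[of "card A"] assms(2,3) by (cases "A \<subseteq> {1..N}") auto
  qed
qed


definition arc_of :: "int \<times> int \<Rightarrow> int \<times> int" where
  "arc_of x = (if 0 < snd x \<or> (snd x = 0 \<and> 0 < fst x) then x else - x)"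

definition primitive :: "int \<times> int \<Rightarrow> bool" where
  "primitive x = coprime (fst x) (snd x)"

lemma det2_uminus_left [simp]: "det2 (- x) y = - det2 x y" by (simp add: det2_def)
lemma det2_uminus_right [simp]: "det2 x (- y) = - det2 x y" by (simp add: det2_def)
lemma det2_swap: "det2 y x = - det2 x y" by (simp add: det2_def)
lemma det2_add_left [simp]: "det2 (x + y) y = det2 x y" by (simp add: det2_def algebra_simps)
lemma det2_add_right [simp]: "det2 x (x + y) = det2 x y" by (simp add: det2_def algebra_simps)
lemma det2_diff_left [simp]: "det2 (x - y) y = det2 x y" by (simp add: det2_def algebra_simps)
lemma det2_diff_right [simp]: "det2 x (x - y) = - det2 x y" by (simp add: det2_def algebra_simps)

lemma primitive_if_unimodular: assumes "\<bar>det2 x y\<bar> = 1" shows "primitive x"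
  unfolding primitive_def
proof (rule coprimeI)
  fix c assume c: "c dvd fst x" "c dvd snd x"
  have "c dvd det2 x y" unfolding det2_def using c by simp
  then have "c dvd \<bar>det2 x y\<bar>" by simp
  then show "is_unit c" using assms by simp
qed

lemma primitive_uminus [simp]: "primitive (- x) = primitive x" by (simp add: primitive_def)

lemma is_arc_arc_of: assumes "primitive x" shows "is_arc (arc_of x)"
proof -
  have cp: "coprime (fst x) (snd x)" using assms unfolding primitive_def .
  show ?thesis
  proof (cases "0 < snd x \<or> (snd x = 0 \<and> 0 < fst x)")
    case True
    then show ?thesis unfolding arc_of_def is_arc_def using cp by auto
  next
    case False
    show ?thesis
    proof (cases "snd x = 0")
      case True
      then have "is_unit (fst x)" using cp by simp
      then have "fst x = 1 \<or> fst x = -1" by auto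
      then show ?thesis unfolding arc_of_def is_arc_def using False True by auto
    next
      case snd_nonzero: False
      then have "snd x < 0" using False by auto
      then show ?thesis unfolding arc_of_def is_arc_def using False cp by auto
    qed
  qed
qed

lemma arc_of_uminus [simp]: "arc_of (- x) = arc_of x"
  unfolding arc_of_def by (cases x) auto

lemma arc_of_idem [simp]: "arc_of (arc_of x) = arc_of x"
  unfolding arc_of_def by (auto simp: prod_eq_iff)

lemma arc_of_cases: "arc_of x = x \<or> arc_of x = - x"
  unfolding arc_of_def by auto

lemma abs_det2_arc_of: "\<bar>det2 (arc_of x) (arc_of y)\<bar> = \<bar>det2 x y\<bar>"
  using arc_of_cases[of x] arc_of_cases[of y] by auto

lemma arcs_adjacent_arc_of: "arcs_adjacent (arc_of x) (arc_of y) \<longleftrightarrow> \<bar>det2 x y\<bar> = 1"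
  unfolding arcs_adjacent_def using abs_det2_arc_of[of x y] by (simp add: det2_def)

lemma arc_of_arc: "is_arc g \<Longrightarrow> arc_of g = g"
  unfolding arc_of_def is_arc_def by auto

lemma spin_sign_uminus [simp]: "spin_sign al be (- x) = spin_sign al be x"
  unfolding spin_sign_def spin_q_def by simp

lemma spin_sign_arc_of [simp]: "spin_sign al be (arc_of x) = spin_sign al be x"
  using arc_of_cases[of x] by auto

lemma spin_sign_add_eq_diff: "spin_sign al be (x + y) = spin_sign al be (x - y)"
proof -
  have "odd (fst x + fst y) = odd (fst x - fst y)" "odd (snd x + snd y) = odd (snd x - snd y)" by presburger+
  then show ?thesis unfolding spin_sign_def spin_q_def by simp
qed

lemma arc_of_eq_imp: "arc_of x = arc_of y \<Longrightarrow> x = y \<or> x = - y"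
  using arc_of_cases[of x] arc_of_cases[of y] by (auto simp: prod_eq_iff)

lemma unimodular_primitive:
  assumes "\<bar>det2 x y\<bar> = 1"
  shows "primitive x" "primitive y" "primitive (x + y)" "primitive (x - y)"
  using primitive_if_unimodular[OF assms] primitive_if_unimodular[of y x]
    primitive_if_unimodular[of "x + y" y] primitive_if_unimodular[of "x - y" y] assms
  by (simp_all add: det2_swap[of y x])

lemma unimodular_flip_triangulations:
  assumes "\<bar>det2 x y\<bar> = 1"
  shows "is_triangulation (arc_of x) (arc_of y) (arc_of (x - y))"
    "is_triangulation (arc_of x) (arc_of y) (arc_of (x + y))"
    "arc_of (x - y) \<noteq> arc_of (x + y)"
proof -
  have "\<bar>det2 y (x + y)\<bar> = 1" "\<bar>det2 y (x - y)\<bar> = 1"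
    using assms det2_swap[of y "x + y"] det2_swap[of y "x - y"] by simp_all
  then show "is_triangulation (arc_of x) (arc_of y) (arc_of (x - y))"
    "is_triangulation (arc_of x) (arc_of y) (arc_of (x + y))"
    unfolding is_triangulation_def arcs_adjacent_arc_of
    using unimodular_primitive[OF assms] is_arc_arc_of assms by simp_all
  show "arc_of (x - y) \<noteq> arc_of (x + y)"
  proof
    assume "arc_of (x - y) = arc_of (x + y)"
    then have "x - y = x + y \<or> x - y = - (x + y)" by (rule arc_of_eq_imp)
    then have "y = 0 \<or> x = 0" by (auto simp: prod_eq_iff)
    then show False using assms by (auto simp: det2_def)
  qed
qed

lemma gadd_apply [simp]: "gadd x y A = x A + y A"
  by (simp add: gadd_def)

lemma gscale_apply [simp]: "gscale r x A = r * x A"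
  by (simp add: gscale_def)

lemma spin_sign_nonzero [simp]: "spin_sign al be x \<noteq> 0"
  by (simp add: spin_sign_def)

locale super_teich =
  fixes N :: nat and lam :: "arc \<Rightarrow> grass" and mu1 mu2 :: "arc set \<Rightarrow> grass" and al be :: bool
  assumes point: "super_teich_point N lam mu1 mu2 al be"
begin

definition lamv :: "int \<times> int \<Rightarrow> grass" where
  "lamv x = lam (arc_of x)"

definition bodyv :: "int \<times> int \<Rightarrow> real" where
  "bodyv x = lamv x {}"

definition mu_prod :: "arc set \<Rightarrow> grass" where
  "mu_prod T = gmul N (mu1 T) (mu2 T)"

text \<open>The invariant W of the flip that replaces x - y by x + y (W_inv in the definition of a point).\<close>

definition tri_W :: "int \<times> int \<Rightarrow> int \<times> int \<Rightarrow> grass" where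
  "tri_W x y = gscale (spin_sign al be (x - y)) (mu_prod {arc_of x, arc_of y, arc_of (x - y)})"

lemma lam_arc: "is_arc g \<Longrightarrow> is_even N (lam g) \<and> 0 < body (lam g)"
  using point unfolding super_teich_point_def by blast

lemma mu_odd: "is_triangulation a b c \<Longrightarrow> is_odd N (mu1 {a, b, c}) \<and> is_odd N (mu2 {a, b, c})"
  using point unfolding super_teich_point_def by blast

lemma super_ptolemy:
  "is_triangulation a b c \<Longrightarrow> is_triangulation a b d \<Longrightarrow> c \<noteq> d \<Longrightarrow>
    gmul N (lam c) (lam d) = gadd (gadd (gmul N (lam a) (lam a)) (gmul N (lam b) (lam b)))
      (gmul N (gmul N (lam a) (lam b)) (W_inv N mu1 mu2 al be a b c))"
  using point unfolding super_teich_point_def by blast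

lemma bodyv_pos: "primitive x \<Longrightarrow> 0 < bodyv x"
  unfolding bodyv_def lamv_def using lam_arc[OF is_arc_arc_of] by (simp add: body_def)

lemma lamv_even: "primitive x \<Longrightarrow> is_even N (lamv x)"
  unfolding lamv_def using lam_arc[OF is_arc_arc_of] by simp

lemma bodyv_uminus [simp]: "bodyv (- x) = bodyv x"
  unfolding bodyv_def lamv_def by simp

lemma lamv_uminus [simp]: "lamv (- x) = lamv x"
  unfolding lamv_def by simp

lemma lamv_arc_of [simp]: "lamv (arc_of x) = lamv x"
  unfolding lamv_def by simp

lemma bodyv_arc_of [simp]: "bodyv (arc_of x) = bodyv x"
  unfolding bodyv_def by simp

lemma super_ptolemy_vec:
  assumes "\<bar>det2 x y\<bar> = 1"
  shows "gmul N (lamv (x - y)) (lamv (x + y)) =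
    gadd (gadd (gmul N (lamv x) (lamv x)) (gmul N (lamv y) (lamv y)))
      (gmul N (gmul N (lamv x) (lamv y)) (tri_W x y))"
  using super_ptolemy[OF unimodular_flip_triangulations[OF assms]]
  unfolding lamv_def tri_W_def W_inv_def mu_prod_def by simp

lemma tri_W_body: "\<bar>det2 x y\<bar> = 1 \<Longrightarrow> tri_W x y {} = 0"
  using mu_odd[OF unimodular_flip_triangulations(1)] is_odd_body[of N "mu1 _"]
  unfolding tri_W_def mu_prod_def by simp

lemma bodyv_ptolemy:
  assumes "\<bar>det2 x y\<bar> = 1"
  shows "bodyv (x + y) * bodyv (x - y) = (bodyv x)\<^sup>2 + (bodyv y)\<^sup>2"
  using fun_cong[OF super_ptolemy_vec[OF assms], of "{}"] tri_W_body[OF assms]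
  unfolding bodyv_def by (simp add: power2_eq_square mult.commute)

text \<open>The super Ptolemy relation holds for the flip in both directions.  The two products
  of lambda-lengths agree since even elements commute, and cancelling the factor
  lambda_x lambda_y (whose body is invertible) shows that the two triangles of a flip
  carry the same mu-product.\<close>

lemma mu_prod_flip_invariant:
  assumes "\<bar>det2 x y\<bar> = 1"
  shows "mu_prod {arc_of x, arc_of y, arc_of (x - y)} = mu_prod {arc_of x, arc_of y, arc_of (x + y)}"
proof -
  have flip: "\<bar>det2 x (- y)\<bar> = 1" using assms by simp
  have "gmul N (lamv (x - y)) (lamv (x + y)) = gmul N (lamv (x + y)) (lamv (x - y))"
    using gmul_comm_even lamv_even unimodular_primitive[OF assms] by blast
  then have "gmul N (gmul N (lamv x) (lamv y)) (tri_W x y) = gmul N (gmul N (lamv x) (lamv y)) (tri_W x (- y))"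
    using super_ptolemy_vec[OF assms] super_ptolemy_vec[OF flip] by (auto simp: fun_eq_iff)
  moreover have "gmul N (lamv x) (lamv y) {} \<noteq> 0"
    using bodyv_pos unimodular_primitive[OF assms] unfolding bodyv_def by (simp add: less_imp_neq[symmetric])
  ultimately have "tri_W x y = tri_W x (- y)"
    by (rule gmul_left_cancel[rotated 3]) (simp_all add: tri_W_def mu_prod_def gmul_outside)
  then show ?thesis
    unfolding tri_W_def using spin_sign_add_eq_diff[of al be x y] by (simp add: fun_eq_iff)
qed

end


section \<open>Markov descent to a reduced triangle\<close>

definition markov_ratio :: "real \<Rightarrow> real \<Rightarrow> real \<Rightarrow> real" where
  "markov_ratio x y z = (x\<^sup>2 + y\<^sup>2 + z\<^sup>2) / (x * y * z)"

definition markov_reduced :: "real \<Rightarrow> real \<Rightarrow> real \<Rightarrow> bool" where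
  "markov_reduced x y z \<longleftrightarrow> 2 * z \<le> x * y \<and> 2 * x \<le> y * z \<and> 2 * y \<le> x * z"

lemma markov_ratio_pos: "0 < x \<Longrightarrow> 0 < y \<Longrightarrow> 0 < z \<Longrightarrow> 0 < markov_ratio x y z"
  unfolding markov_ratio_def by (intro divide_pos_pos add_pos_pos mult_pos_pos) auto

lemma markov_ratio_perm:
  "markov_ratio x y z = markov_ratio y z x" "markov_ratio x y z = markov_ratio y x z"
  unfolding markov_ratio_def by (simp_all add: algebra_simps)

lemma markov_reduced_perm:
  "markov_reduced x y z = markov_reduced y z x" "markov_reduced x y z = markov_reduced y x z"
  unfolding markov_reduced_def by (auto simp: algebra_simps)

lemma markov_ratio_flip:
  fixes x y z w :: real
  assumes "0 < x" "0 < y" "0 < z" "0 < w" "w * z = x\<^sup>2 + y\<^sup>2"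
  shows "markov_ratio x y w = markov_ratio x y z" "w + z = markov_ratio x y z * x * y"
proof -
  have "x\<^sup>2 + y\<^sup>2 + z\<^sup>2 = markov_ratio x y z * x * y * z"
    using assms unfolding markov_ratio_def by simp
  from vieta_flip[OF assms(3,5) this] assms(1,2,4)
  show "markov_ratio x y w = markov_ratio x y z" "w + z = markov_ratio x y z * x * y"
    unfolding markov_ratio_def[of x y w] by simp_all
qed

lemma markov_scaled_identity:
  fixes x y z :: real
  assumes "0 < x" "0 < y" "0 < z"
  defines "h \<equiv> markov_ratio x y z"
  shows "(h * x)\<^sup>2 + (h * y)\<^sup>2 + (h * z)\<^sup>2 = (h * x) * (h * y) * (h * z)"
proof -
  have "h * (x * y * z) = x\<^sup>2 + y\<^sup>2 + z\<^sup>2" unfolding h_def markov_ratio_def using assms by simp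
  then show ?thesis by (simp add: power2_eq_square algebra_simps)
qed

lemma markov_gt_2:
  fixes x y z :: real
  assumes "0 < x" "0 < y" "0 < z" "x\<^sup>2 + y\<^sup>2 + z\<^sup>2 = x * y * z"
  shows "x\<^sup>2 \<le> (x - 2) * (y * z)" "2 < x"
proof -
  have e: "(x - 2) * (y * z) = x\<^sup>2 + (y - z)\<^sup>2"
    using assms(4) by (simp add: power2_eq_square algebra_simps)
  then show "x\<^sup>2 \<le> (x - 2) * (y * z)" by simp
  have "0 < (x - 2) * (y * z)" using e assms(1) by (simp add: add_pos_nonneg)
  then show "2 < x" using mult_pos_pos[OF assms(2,3)] by (simp add: zero_less_mult_iff)
qed

text \<open>A flip that does not reach a reduced triple lowers the product of the three
  (scaled) lambda-lengths by at least 128 / product; this is what makes the descent terminate.\<close>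

lemma markov_descent_gain:
  fixes x y z :: real
  assumes pos: "0 < x" "0 < y" "0 < z" and mk: "x\<^sup>2 + y\<^sup>2 + z\<^sup>2 = x * y * z"
    and flip: "x * (x * y - z) < 2 * y"
  shows "128 / (x * y * z) \<le> x * y * z - x * y * (x * y - z)"
proof -
  have mk': "y\<^sup>2 + x\<^sup>2 + z\<^sup>2 = y * x * z" using mk by (simp add: algebra_simps)
  have x: "2 < x" "x\<^sup>2 \<le> (x - 2) * (y * z)" and y: "2 < y"
    using markov_gt_2[OF pos mk] markov_gt_2[OF pos(2,1,3) mk'] by simp_all
  define D where "D = x * y * z - x * y * (x * y - z)"
  have "x * y * (x * x * y - 4 * y) < x * y * (x * (2 * z - x * y))"
    using flip pos by (intro mult_strict_left_mono) (auto simp: algebra_simps)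
  then have "x * (y\<^sup>2 * (x\<^sup>2 - 4)) < x * D"
    unfolding D_def by (simp add: power2_eq_square algebra_simps)
  then have D: "y\<^sup>2 * (x\<^sup>2 - 4) < D" using pos by simp
  have "x ^ 3 * y\<^sup>2 * (x + 2) \<le> x * y\<^sup>2 * (x + 2) * ((x - 2) * (y * z))"
    using x pos by (simp add: power2_eq_square power3_eq_cube mult_left_mono)
  also have "\<dots> = x * y * z * (y\<^sup>2 * (x\<^sup>2 - 4))" by (simp add: power2_eq_square algebra_simps)
  finally have "x ^ 3 * y\<^sup>2 * (x + 2) \<le> x * y * z * (y\<^sup>2 * (x\<^sup>2 - 4))" .
  moreover have "8 * 4 * 4 \<le> x ^ 3 * y\<^sup>2 * (x + 2)"
    using x y power_mono[of 2 x 3] power_mono[of 2 y 2] by (intro mult_mono) auto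
  ultimately have "128 \<le> x * y * z * (y\<^sup>2 * (x\<^sup>2 - 4))" by simp
  then have "128 / (x * y * z) \<le> y\<^sup>2 * (x\<^sup>2 - 4)" using pos by (simp add: field_simps)
  then show ?thesis using D unfolding D_def by simp
qed

lemma markov_descent_step:
  fixes x y z :: real
  assumes pos: "0 < x" "0 < y" "0 < z" and mk: "x\<^sup>2 + y\<^sup>2 + z\<^sup>2 = x * y * z"
    and v: "x * y < 2 * z"
  shows "x * y * (x * y - z) < x * y * z"
    "\<not> markov_reduced x y (x * y - z) \<Longrightarrow> 128 / (x * y * z) \<le> x * y * z - x * y * (x * y - z)"
proof -
  show "x * y * (x * y - z) < x * y * z" using v pos by (intro mult_strict_left_mono) auto
  assume "\<not> markov_reduced x y (x * y - z)"
  then consider "x * (x * y - z) < 2 * y" | "y * (y * x - z) < 2 * x"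
    using v unfolding markov_reduced_def by (auto simp: algebra_simps)
  then show "128 / (x * y * z) \<le> x * y * z - x * y * (x * y - z)"
  proof cases
    case 1
    then show ?thesis using markov_descent_gain[OF pos mk] by simp
  next
    case 2
    have "y\<^sup>2 + x\<^sup>2 + z\<^sup>2 = y * x * z" using mk by (simp add: algebra_simps)
    from markov_descent_gain[OF pos(2,1,3) this 2] show ?thesis by (simp add: ac_simps)
  qed
qed

context super_teich
begin

text \<open>A pair p = (a, b) stands for the triangle with sides a, b and a + b.\<close>

definition unimodular :: "(int \<times> int) \<times> (int \<times> int) \<Rightarrow> bool" where
  "unimodular p \<longleftrightarrow> \<bar>det2 (fst p) (snd p)\<bar> = 1"

definition side1 :: "(int \<times> int) \<times> (int \<times> int) \<Rightarrow> real" where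
  "side1 p = bodyv (fst p)"

definition side2 :: "(int \<times> int) \<times> (int \<times> int) \<Rightarrow> real" where
  "side2 p = bodyv (snd p)"

definition side3 :: "(int \<times> int) \<times> (int \<times> int) \<Rightarrow> real" where
  "side3 p = bodyv (fst p + snd p)"

definition rotate_tri :: "(int \<times> int) \<times> (int \<times> int) \<Rightarrow> (int \<times> int) \<times> (int \<times> int)" where
  "rotate_tri p = (snd p, - (fst p + snd p))"

definition flip_tri :: "(int \<times> int) \<times> (int \<times> int) \<Rightarrow> (int \<times> int) \<times> (int \<times> int)" where
  "flip_tri p = (fst p - snd p, snd p)"

definition tri_ratio :: "(int \<times> int) \<times> (int \<times> int) \<Rightarrow> real" where
  "tri_ratio p = markov_ratio (side1 p) (side2 p) (side3 p)"

definition tri_product :: "real \<Rightarrow> (int \<times> int) \<times> (int \<times> int) \<Rightarrow> real" where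
  "tri_product h p = (h * side1 p) * (h * side2 p) * (h * side3 p)"

definition reduced :: "real \<Rightarrow> (int \<times> int) \<times> (int \<times> int) \<Rightarrow> bool" where
  "reduced h p \<longleftrightarrow> markov_reduced (h * side1 p) (h * side2 p) (h * side3 p)"

lemma unimodular_rotate: "unimodular p \<Longrightarrow> unimodular (rotate_tri p)"
  unfolding unimodular_def rotate_tri_def by (simp add: det2_def algebra_simps)

lemma unimodular_flip: "unimodular p \<Longrightarrow> unimodular (flip_tri p)"
  unfolding unimodular_def flip_tri_def by simp

lemma sides_rotate:
  "side1 (rotate_tri p) = side2 p" "side2 (rotate_tri p) = side3 p" "side3 (rotate_tri p) = side1 p"
proof -
  show "side1 (rotate_tri p) = side2 p" unfolding side1_def side2_def rotate_tri_def by simp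
  show "side2 (rotate_tri p) = side3 p"
    unfolding side2_def side3_def rotate_tri_def snd_conv bodyv_uminus ..
  have "snd p + - (fst p + snd p) = - fst p" by simp
  then show "side3 (rotate_tri p) = side1 p" unfolding side3_def side1_def rotate_tri_def by simp
qed

lemma sides_flip:
  "side1 (flip_tri p) = bodyv (fst p - snd p)" "side2 (flip_tri p) = side2 p" "side3 (flip_tri p) = side1 p"
  unfolding side1_def side2_def side3_def flip_tri_def by simp_all

lemma sides_pos:
  assumes "unimodular p"
  shows "0 < side1 p" "0 < side2 p" "0 < side3 p" "0 < bodyv (fst p - snd p)"
  using unimodular_primitive[of "fst p" "snd p"] assms bodyv_pos
  unfolding unimodular_def side1_def side2_def side3_def by auto

lemma tri_ratio_rotate: "tri_ratio (rotate_tri p) = tri_ratio p"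
  unfolding tri_ratio_def sides_rotate using markov_ratio_perm by metis

lemma tri_ratio_flip:
  assumes "unimodular p"
  shows "tri_ratio (flip_tri p) = tri_ratio p"
    and "bodyv (fst p - snd p) = tri_ratio p * side1 p * side2 p - side3 p"
proof -
  have "bodyv (fst p - snd p) * side3 p = (side1 p)\<^sup>2 + (side2 p)\<^sup>2"
    using bodyv_ptolemy[of "fst p" "snd p"] assms
    unfolding unimodular_def side1_def side2_def side3_def by (simp add: mult.commute)
  note flip = markov_ratio_flip[OF sides_pos[OF assms] this]
  show "tri_ratio (flip_tri p) = tri_ratio p"
    unfolding tri_ratio_def sides_flip using flip(1) markov_ratio_perm by metis
  show "bodyv (fst p - snd p) = tri_ratio p * side1 p * side2 p - side3 p"
    unfolding tri_ratio_def using flip(2) by simp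
qed

lemma tri_product_rotate: "tri_product h (rotate_tri p) = tri_product h p"
  unfolding tri_product_def sides_rotate by (simp add: algebra_simps)

lemma tri_product_pos: "unimodular p \<Longrightarrow> 0 < h \<Longrightarrow> 0 < tri_product h p"
  unfolding tri_product_def using sides_pos by simp

lemma descent_step:
  assumes uni: "unimodular p" and h: "tri_ratio p = h"
    and v: "(h * side1 p) * (h * side2 p) < 2 * (h * side3 p)"
  shows "unimodular (flip_tri p)" "tri_ratio (flip_tri p) = h" "tri_product h (flip_tri p) < tri_product h p"
    "\<not> reduced h (flip_tri p) \<Longrightarrow> 128 / tri_product h p \<le> tri_product h p - tri_product h (flip_tri p)"
proof -
  note sides = sides_pos[OF uni]
  have "0 < h" unfolding h[symmetric] tri_ratio_def using markov_ratio_pos sides by simp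
  let ?x = "h * side1 p" and ?y = "h * side2 p" and ?z = "h * side3 p"
  have pos: "0 < ?x" "0 < ?y" "0 < ?z" using \<open>0 < h\<close> sides by auto
  have mk: "?x\<^sup>2 + ?y\<^sup>2 + ?z\<^sup>2 = ?x * ?y * ?z"
    using markov_scaled_identity[OF sides(1-3)] h unfolding tri_ratio_def by simp
  have flip: "h * side1 (flip_tri p) = ?x * ?y - ?z"
    unfolding sides_flip tri_ratio_flip(2)[OF uni] h by (simp add: algebra_simps)
  have products: "tri_product h (flip_tri p) = ?x * ?y * (?x * ?y - ?z)" "tri_product h p = ?x * ?y * ?z"
    unfolding tri_product_def flip sides_flip(2,3) by (simp_all add: algebra_simps)
  show "unimodular (flip_tri p)" using unimodular_flip[OF uni] .
  show "tri_ratio (flip_tri p) = h" using tri_ratio_flip(1)[OF uni] h by simp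
  show "tri_product h (flip_tri p) < tri_product h p"
    unfolding products using markov_descent_step(1)[OF pos mk v] .
  assume "\<not> reduced h (flip_tri p)"
  then have "\<not> markov_reduced ?x ?y (?x * ?y - ?z)"
    unfolding reduced_def flip sides_flip(2,3) using markov_reduced_perm by metis
  then show "128 / tri_product h p \<le> tri_product h p - tri_product h (flip_tri p)"
    unfolding products using markov_descent_step(2)[OF pos mk v] by simp
qed

lemma descent_rotation:
  assumes "unimodular p" "\<not> reduced h p"
  obtains p' where "unimodular p'" "tri_ratio p' = tri_ratio p" "tri_product h p' = tri_product h p"
    "(h * side1 p') * (h * side2 p') < 2 * (h * side3 p')"
proof -
  consider "(h * side1 p) * (h * side2 p) < 2 * (h * side3 p)"
    | "(h * side2 p) * (h * side3 p) < 2 * (h * side1 p)"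
    | "(h * side1 p) * (h * side3 p) < 2 * (h * side2 p)"
    using assms(2) unfolding reduced_def markov_reduced_def by linarith
  then show ?thesis
  proof cases
    case 1
    then show ?thesis using that assms(1) by blast
  next
    case 2
    then show ?thesis
      using that[of "rotate_tri p"] assms(1)
      by (simp add: unimodular_rotate tri_ratio_rotate tri_product_rotate sides_rotate)
  next
    case 3
    then show ?thesis
      using that[of "rotate_tri (rotate_tri p)"] assms(1)
      by (simp add: unimodular_rotate tri_ratio_rotate tri_product_rotate sides_rotate mult.commute)
  qed
qed

lemma descent_bounded:
  assumes "0 < h" "0 < P"
  shows "unimodular p \<Longrightarrow> tri_ratio p = h \<Longrightarrow> tri_product h p \<le> P \<Longrightarrow>
    tri_product h p < of_nat n * (128 / P) \<Longrightarrow> \<exists>q. unimodular q \<and> tri_ratio q = h \<and> reduced h q"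
proof (induction n arbitrary: p)
  case 0
  then show ?case using tri_product_pos assms(1) by (auto simp: less_le_not_le)
next
  case (Suc n)
  show ?case
  proof (cases "reduced h p")
    case True
    then show ?thesis using Suc.prems by blast
  next
    case False
    obtain p' where p': "unimodular p'" "tri_ratio p' = h" "tri_product h p' = tri_product h p"
      "(h * side1 p') * (h * side2 p') < 2 * (h * side3 p')"
      using descent_rotation[OF Suc.prems(1) False] Suc.prems(2) by metis
    note step = descent_step[OF p'(1,2,4)]
    show ?thesis
    proof (cases "reduced h (flip_tri p')")
      case True
      then show ?thesis using step(1,2) by blast
    next
      case False
      have "128 / P \<le> 128 / tri_product h p'"
        using tri_product_pos[OF p'(1) assms(1)] Suc.prems(3) p'(3) by (intro divide_left_mono) auto
      then have "tri_product h (flip_tri p') \<le> tri_product h p - 128 / P"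
        using step(4)[OF False] p'(3) by linarith
      moreover have "of_nat (Suc n) * (128 / P) = of_nat n * (128 / P) + 128 / P"
        using assms(2) by (simp add: field_simps)
      ultimately have "tri_product h (flip_tri p') < of_nat n * (128 / P)"
        using Suc.prems(4) by linarith
      moreover have "tri_product h (flip_tri p') \<le> P" using step(3) p'(3) Suc.prems(3) by linarith
      ultimately show ?thesis using Suc.IH step(1,2) by blast
    qed
  qed
qed

lemma reduced_exists:
  assumes "unimodular p"
  shows "\<exists>q. unimodular q \<and> tri_ratio q = tri_ratio p \<and> reduced (tri_ratio p) q"
proof -
  let ?h = "tri_ratio p"
  have h: "0 < ?h" unfolding tri_ratio_def using markov_ratio_pos sides_pos[OF assms] by simp
  let ?P = "tri_product ?h p"
  have P: "0 < ?P" using tri_product_pos[OF assms h] .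
  obtain n :: nat where "?P / (128 / ?P) < of_nat n" using reals_Archimedean2 by blast
  then have "?P < of_nat n * (128 / ?P)" using P by (simp add: field_simps)
  then show ?thesis using descent_bounded[OF h P assms] by simp
qed

end


text \<open>A unimodular basis (P, Q) maps the Stern-Brocot tree onto the arcs alpha P + beta Q
  with coprime positive coefficients alpha, beta.\<close>

definition basis_comb :: "int \<times> int \<Rightarrow> int \<times> int \<Rightarrow> int \<times> int \<Rightarrow> int \<times> int" where
  "basis_comb P Q x = (fst x * fst P + snd x * fst Q, fst x * snd P + snd x * snd Q)"

lemma basis_comb_add: "basis_comb P Q (x + y) = basis_comb P Q x + basis_comb P Q y"
  by (simp add: basis_comb_def algebra_simps)

lemma basis_comb_diff: "basis_comb P Q (x - y) = basis_comb P Q x - basis_comb P Q y"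
  by (simp add: basis_comb_def algebra_simps)

lemma basis_comb_uminus: "basis_comb P Q (- x) = - basis_comb P Q x"
  by (simp add: basis_comb_def)

lemma basis_comb_det2: "det2 (basis_comb P Q x) (basis_comb P Q y) = det2 P Q * det2 x y"
  by (simp add: basis_comb_def det2_def algebra_simps)

lemma basis_comb_basis [simp]:
  "basis_comb P Q (1, 0) = P" "basis_comb P Q (0, 1) = Q"
  "basis_comb P Q (1, 1) = P + Q" "basis_comb P Q (1, -1) = P - Q"
  by (simp_all add: basis_comb_def prod_eq_iff)

lemma unimodular_basis_comb:
  assumes "\<bar>det2 P Q\<bar> = 1" "sb_pair u v"
  shows "\<bar>det2 (basis_comb P Q u) (basis_comb P Q v)\<bar> = 1"
  using assms sb_pair_det2[OF assms(2)] by (simp add: basis_comb_det2 abs_mult)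

context super_teich
begin

text \<open>At non-primitive vectors the value 1 is junk that only keeps the function positive.\<close>

definition tree_E :: "int \<times> int \<Rightarrow> int \<times> int \<Rightarrow> int \<times> int \<Rightarrow> real" where
  "tree_E P Q x = (if primitive (basis_comb P Q x) then bodyv (basis_comb P Q x) else 1)"

lemma primitive_tree_node:
  assumes "\<bar>det2 P Q\<bar> = 1" "sb_pair u v"
  shows "primitive (basis_comb P Q u)" "primitive (basis_comb P Q v)"
    "primitive (basis_comb P Q (u + v))" "primitive (basis_comb P Q (u - v))"
  using unimodular_primitive[OF unimodular_basis_comb[OF assms]]
  by (simp_all add: basis_comb_add basis_comb_diff)

lemma tree_E_node:
  assumes "\<bar>det2 P Q\<bar> = 1" "sb_pair u v"
  shows "tree_E P Q u = bodyv (basis_comb P Q u)" "tree_E P Q v = bodyv (basis_comb P Q v)"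
    "tree_E P Q (u + v) = bodyv (basis_comb P Q (u + v))"
    "tree_E P Q (u - v) = bodyv (basis_comb P Q (u - v))"
  using primitive_tree_node[OF assms] unfolding tree_E_def by simp_all

lemma ptolemy_tree_tree_E:
  assumes "\<bar>det2 P Q\<bar> = 1" "bodyv (P - Q) \<le> bodyv (P + Q)"
  shows "ptolemy_tree (tree_E P Q)"
proof
  show "0 < tree_E P Q x" for x unfolding tree_E_def using bodyv_pos by simp
  show "tree_E P Q (- x) = tree_E P Q x" for x unfolding tree_E_def basis_comb_uminus by simp
  show "tree_E P Q (u + v) * tree_E P Q (u - v) = (tree_E P Q u)\<^sup>2 + (tree_E P Q v)\<^sup>2"
    if "sb_pair u v" for u v
    using bodyv_ptolemy[OF unimodular_basis_comb[OF assms(1) that]]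
    unfolding tree_E_node[OF assms(1) that] basis_comb_add basis_comb_diff .
  show "tree_E P Q (1, - 1) \<le> tree_E P Q (1, 1)"
    using tree_E_node[OF assms(1) sb_pair.root] assms(2) by simp
qed

lemma mu_prod_tree_const:
  assumes "\<bar>det2 P Q\<bar> = 1"
  shows "sb_pair u v \<Longrightarrow>
    mu_prod {arc_of (basis_comb P Q u), arc_of (basis_comb P Q v), arc_of (basis_comb P Q (u - v))}
      = mu_prod {arc_of P, arc_of Q, arc_of (P - Q)}"
proof (induction rule: sb_pair.induct)
  case root
  show ?case by simp
next
  case (left u v)
  then show ?case
    using mu_prod_flip_invariant[OF unimodular_basis_comb[OF assms left.hyps]]
    by (simp add: basis_comb_add basis_comb_diff basis_comb_uminus insert_commute)
next
  case (right u v)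
  then show ?case
    using mu_prod_flip_invariant[OF unimodular_basis_comb[OF assms right.hyps]]
    by (simp add: basis_comb_add basis_comb_diff basis_comb_uminus insert_commute)
qed

end

section \<open>Coefficient estimates\<close>

lemma sum_le_card_bound:
  fixes f :: "'a \<Rightarrow> real"
  assumes "finite S" "\<And>i. i \<in> S \<Longrightarrow> f i \<le> K" "card S \<le> n" "0 \<le> K"
  shows "sum f S \<le> of_nat n * K"
proof -
  have "sum f S \<le> of_nat (card S) * K" using sum_bounded_above[of S f K] assms(2) by simp
  also have "\<dots> \<le> of_nat n * K" using assms(3,4) by (intro mult_right_mono) auto
  finally show ?thesis .
qed

lemma abs_mult_le_mult:
  fixes a b A B :: real
  assumes "\<bar>a\<bar> \<le> A" "\<bar>b\<bar> \<le> B"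
  shows "\<bar>a\<bar> * \<bar>b\<bar> \<le> A * B"
  using assms by (meson abs_ge_zero mult_mono order_trans)

context super_teich
begin

lemma coeff_ptolemy:
  assumes "\<bar>det2 x y\<bar> = 1" "A \<subseteq> {1..N}" "A \<noteq> {}"
  shows "bodyv (x - y) * lamv (x + y) A + bodyv (x + y) * lamv (x - y) A =
    2 * bodyv x * lamv x A + 2 * bodyv y * lamv y A
    + (gmul_mixed (lamv x) (lamv x) A + gmul_mixed (lamv y) (lamv y) A
       + gmul N (gmul N (lamv x) (lamv y)) (tri_W x y) A
       - gmul_mixed (lamv (x - y)) (lamv (x + y)) A)"
proof -
  have "gmul N (lamv (x - y)) (lamv (x + y)) A =
      gmul N (lamv x) (lamv x) A + gmul N (lamv y) (lamv y) A
      + gmul N (gmul N (lamv x) (lamv y)) (tri_W x y) A"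
    using fun_cong[OF super_ptolemy_vec[OF assms(1)], of A] by simp
  then show ?thesis
    unfolding gmul_split[OF assms(2,3), of "lamv (x - y)"] gmul_split[OF assms(2,3), of "lamv x"]
      gmul_split[OF assms(2,3), of "lamv y"] bodyv_def
    by (simp add: algebra_simps)
qed

definition coeff_bound :: "nat \<Rightarrow> real \<Rightarrow> real \<Rightarrow> bool" where
  "coeff_bound k d M \<longleftrightarrow> (\<forall>z B. primitive z \<longrightarrow> B \<subseteq> {1..N} \<longrightarrow> card B \<le> k \<longrightarrow>
     \<bar>lamv z B\<bar> \<le> M * bodyv z powr (1 + d))"

lemma coeff_boundD:
  "coeff_bound k d M \<Longrightarrow> primitive z \<Longrightarrow> B \<subseteq> {1..N} \<Longrightarrow> card B \<le> k \<Longrightarrow>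
    \<bar>lamv z B\<bar> \<le> M * bodyv z powr (1 + d)"
  unfolding coeff_bound_def by blast

lemma coeff_bound_nonneg: "coeff_bound k d M \<Longrightarrow> primitive z \<Longrightarrow> 0 \<le> M * bodyv z powr (1 + d)"
  using coeff_boundD[of k d M z "{}"] abs_ge_zero order_trans by fastforce

lemma abs_gmul_mixed_coeff_bound:
  assumes L: "coeff_bound k d M" and prim: "primitive p" "primitive q"
    and A: "A \<subseteq> {1..N}" "card A = Suc k"
  shows "\<bar>gmul_mixed (lamv p) (lamv q) A\<bar>
    \<le> 2 ^ Suc k * ((M * bodyv p powr (1 + d)) * (M * bodyv q powr (1 + d)))"
proof -
  have finA: "finite A" using A(1) finite_subset by blast
  have "\<bar>gmul_mixed (lamv p) (lamv q) A\<bar> \<le> (\<Sum>B\<in>Pow A - {{}, A}. \<bar>lamv p B\<bar> * \<bar>lamv q (A - B)\<bar>)"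
    by (rule abs_gmul_mixed_le)
  also have "\<dots> \<le> of_nat (2 ^ Suc k) * ((M * bodyv p powr (1 + d)) * (M * bodyv q powr (1 + d)))"
  proof (rule sum_le_card_bound)
    have "card (Pow A - {{}, A}) \<le> card (Pow A)" by (rule card_mono) (use finA in auto)
    then show "card (Pow A - {{}, A}) \<le> 2 ^ Suc k" using finA A(2) by (simp add: card_Pow)
    fix B assume B: "B \<in> Pow A - {{}, A}"
    have "card B < card A" "card (A - B) < card A"
      using B psubset_card_mono[OF finA] by (auto intro!: psubset_card_mono[OF finA])
    then show "\<bar>lamv p B\<bar> * \<bar>lamv q (A - B)\<bar> \<le> (M * bodyv p powr (1 + d)) * (M * bodyv q powr (1 + d))"
      using B A by (intro abs_mult_le_mult coeff_boundD[OF L]) (auto simp: prim)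
  qed (use finA coeff_bound_nonneg[OF L] prim in auto)
  finally show ?thesis by simp
qed

lemma abs_gmul_coeff_bound:
  assumes L: "coeff_bound k d M" and prim: "primitive p" "primitive q"
    and C: "C \<subseteq> {1..N}" "card C \<le> k"
  shows "\<bar>gmul N (lamv p) (lamv q) C\<bar> \<le> 2 ^ k * ((M * bodyv p powr (1 + d)) * (M * bodyv q powr (1 + d)))"
proof -
  have finC: "finite C" using C(1) finite_subset by blast
  have "\<bar>gmul N (lamv p) (lamv q) C\<bar> \<le> (\<Sum>B\<in>Pow C. \<bar>lamv p B\<bar> * \<bar>lamv q (C - B)\<bar>)"
    by (rule abs_gmul_le)
  also have "\<dots> \<le> of_nat (2 ^ k) * ((M * bodyv p powr (1 + d)) * (M * bodyv q powr (1 + d)))"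
  proof (rule sum_le_card_bound)
    show "card (Pow C) \<le> 2 ^ k" using finC C(2) by (simp add: card_Pow)
    fix B assume B: "B \<in> Pow C"
    have "card B \<le> card C" "card (C - B) \<le> card C" using B finC by (auto intro: card_mono)
    then show "\<bar>lamv p B\<bar> * \<bar>lamv q (C - B)\<bar> \<le> (M * bodyv p powr (1 + d)) * (M * bodyv q powr (1 + d))"
      using B C by (intro abs_mult_le_mult coeff_boundD[OF L]) (auto simp: prim)
  qed (use finC coeff_bound_nonneg[OF L] prim in auto)
  finally show ?thesis by simp
qed

lemma abs_gmul_mu_coeff_bound:
  assumes L: "coeff_bound k d M" and prim: "primitive p" "primitive q"
    and A: "A \<subseteq> {1..N}" "card A = Suc k"
    and W0: "W {} = 0" and Wb: "\<And>D. \<bar>W D\<bar> \<le> Wb"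
  shows "\<bar>gmul N (gmul N (lamv p) (lamv q)) W A\<bar>
    \<le> 2 ^ Suc k * (2 ^ k * ((M * bodyv p powr (1 + d)) * (M * bodyv q powr (1 + d))) * Wb)"
proof -
  let ?K = "2 ^ k * ((M * bodyv p powr (1 + d)) * (M * bodyv q powr (1 + d)))"
  have finA: "finite A" using A(1) finite_subset by blast
  have K: "0 \<le> ?K" using coeff_bound_nonneg[OF L] prim by simp
  have "\<bar>gmul N (gmul N (lamv p) (lamv q)) W A\<bar>
      \<le> (\<Sum>C\<in>Pow A. \<bar>gmul N (lamv p) (lamv q) C\<bar> * \<bar>W (A - C)\<bar>)"
    by (rule abs_gmul_le)
  also have "\<dots> \<le> of_nat (2 ^ Suc k) * (?K * Wb)"
  proof (rule sum_le_card_bound)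
    show "card (Pow A) \<le> 2 ^ Suc k" using finA A(2) by (simp add: card_Pow)
    fix C assume C: "C \<in> Pow A"
    show "\<bar>gmul N (lamv p) (lamv q) C\<bar> * \<bar>W (A - C)\<bar> \<le> ?K * Wb"
    proof (cases "C = A")
      case True
      then show ?thesis using W0 K Wb[of "{}"] by simp
    next
      case False
      then have "C \<subset> A" using C by auto
      then have "card C \<le> k" using psubset_card_mono[OF finA, of C] A(2) by simp
      then have "\<bar>gmul N (lamv p) (lamv q) C\<bar> \<le> ?K"
        using abs_gmul_coeff_bound[OF L prim] C A(1) by auto
      then show ?thesis using Wb[of "A - C"] by (rule abs_mult_le_mult)
    qed
  qed (use finA K Wb[of "{}"] in auto)
  finally show ?thesis by simp
qed

end

lemma powr_product_le:
  fixes a b s D M d :: real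
  assumes "0 < a" "0 < b" "a \<le> s" "b \<le> s" "a * b \<le> D" "0 \<le> d"
  shows "(M * a powr (1 + d)) * (M * b powr (1 + d)) \<le> M\<^sup>2 * D * s powr (2 * d)"
proof -
  have "(M * a powr (1 + d)) * (M * b powr (1 + d)) = (M\<^sup>2 * (a * b)) * (a powr d * b powr d)"
    using assms(1,2) by (simp add: powr_add power2_eq_square algebra_simps)
  also have "\<dots> \<le> (M\<^sup>2 * D) * (s powr d * s powr d)"
    using assms order.trans[OF less_imp_le[OF mult_pos_pos[OF assms(1,2)]] assms(5)]
    by (intro mult_mono mult_left_mono powr_mono2) auto
  also have "s powr d * s powr d = s powr (2 * d)" by (simp flip: powr_add)
  finally show ?thesis by (simp add: mult.assoc)
qed

lemma mixed_terms_bound: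
  fixes ex ey e1 e2 M d K1 K2 m1 m2 m3 m4 :: real
  assumes pos: "0 < ex" "0 < ey" "0 < e1" and ptolemy: "e1 * e2 = ex\<^sup>2 + ey\<^sup>2"
    and le: "ex \<le> e2" "ey \<le> e2" "e1 \<le> e2" and nonneg: "0 \<le> d" "0 \<le> K1" "0 \<le> K2"
    and m1: "\<bar>m1\<bar> \<le> K1 * ((M * ex powr (1 + d)) * (M * ex powr (1 + d)))"
    and m2: "\<bar>m2\<bar> \<le> K1 * ((M * ey powr (1 + d)) * (M * ey powr (1 + d)))"
    and m3: "\<bar>m3\<bar> \<le> K1 * ((M * e1 powr (1 + d)) * (M * e2 powr (1 + d)))"
    and m4: "\<bar>m4\<bar> \<le> K2 * ((M * ex powr (1 + d)) * (M * ey powr (1 + d)))"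
  shows "\<bar>(m1 + m2 + m4 - m3) / (ex\<^sup>2 + ey\<^sup>2)\<bar> \<le> (3 * K1 + K2) * M\<^sup>2 * e2 powr (2 * d)"
proof -
  let ?D = "ex\<^sup>2 + ey\<^sup>2"
  let ?T = "M\<^sup>2 * ?D * e2 powr (2 * d)"
  have D: "0 < ?D" using pos by (simp add: add_pos_pos)
  have T: "(M * a powr (1 + d)) * (M * b powr (1 + d)) \<le> ?T"
    if "0 < a" "0 < b" "a \<le> e2" "b \<le> e2" "a * b \<le> ?D" for a b
    using powr_product_le[OF that nonneg(1)] .
  have "ex * ex \<le> ?D" "ey * ey \<le> ?D" "ex * ey \<le> ?D"
    using sum_squares_bound[of ex ey] mult_pos_pos[OF pos(1,2)] by (simp_all add: power2_eq_square)
  then have "(M * ex powr (1 + d)) * (M * ex powr (1 + d)) \<le> ?T"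
    "(M * ey powr (1 + d)) * (M * ey powr (1 + d)) \<le> ?T"
    "(M * e1 powr (1 + d)) * (M * e2 powr (1 + d)) \<le> ?T"
    "(M * ex powr (1 + d)) * (M * ey powr (1 + d)) \<le> ?T"
    using T pos le ptolemy by auto
  then have "\<bar>m1\<bar> \<le> K1 * ?T" "\<bar>m2\<bar> \<le> K1 * ?T" "\<bar>m3\<bar> \<le> K1 * ?T" "\<bar>m4\<bar> \<le> K2 * ?T"
    using m1 m2 m3 m4 nonneg by (meson mult_left_mono order_trans)+
  then have "\<bar>m1 + m2 + m4 - m3\<bar> \<le> K1 * ?T + K1 * ?T + K2 * ?T + K1 * ?T" by linarith
  also have "\<dots> = ?D * ((3 * K1 + K2) * M\<^sup>2 * e2 powr (2 * d))" by (simp add: algebra_simps)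
  finally show ?thesis using D by (simp add: divide_le_eq mult.commute)
qed

lemma ratio_defect_identity:
  fixes ex ey e1 e2 lx ly l1 l2 F :: real
  assumes pos: "0 < ex" "0 < ey" "0 < e1" "0 < e2" and ptolemy: "e2 * e1 = ex\<^sup>2 + ey\<^sup>2"
    and coeff: "e1 * l2 + e2 * l1 = 2 * ex * lx + 2 * ey * ly + F"
  shows "l1 / e1 + l2 / e2 - (2 * ex\<^sup>2 / (ex\<^sup>2 + ey\<^sup>2) * (lx / ex) + 2 * ey\<^sup>2 / (ey\<^sup>2 + ex\<^sup>2) * (ly / ey))
    = F / (ex\<^sup>2 + ey\<^sup>2)"
proof -
  have D: "0 < ex\<^sup>2 + ey\<^sup>2" using pos by (simp add: add_pos_pos)
  have "l1 / e1 + l2 / e2 = (e1 * l2 + e2 * l1) / (ex\<^sup>2 + ey\<^sup>2)"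
    unfolding ptolemy[symmetric] using pos by (simp add: field_simps)
  moreover have "2 * ex\<^sup>2 / (ex\<^sup>2 + ey\<^sup>2) * (lx / ex) = 2 * ex * lx / (ex\<^sup>2 + ey\<^sup>2)"
    "2 * ey\<^sup>2 / (ey\<^sup>2 + ex\<^sup>2) * (ly / ey) = 2 * ey * ly / (ex\<^sup>2 + ey\<^sup>2)"
    using pos by (simp_all add: power2_eq_square field_simps)
  ultimately show ?thesis by (simp add: coeff add_divide_distrib)
qed

context super_teich
begin

lemma coeff_ratio_defect_bound:
  assumes uni: "\<bar>det2 x y\<bar> = 1"
    and le: "bodyv x \<le> bodyv (x + y)" "bodyv y \<le> bodyv (x + y)" "bodyv (x - y) \<le> bodyv (x + y)"
    and L: "coeff_bound k d M" and d: "0 \<le> d" and A: "A \<subseteq> {1..N}" "card A = Suc k"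
    and Wb: "\<And>D. \<bar>mu_prod {arc_of x, arc_of y, arc_of (x - y)} D\<bar> \<le> Wb"
  shows "\<bar>lamv (x - y) A / bodyv (x - y) + lamv (x + y) A / bodyv (x + y)
      - (2 * (bodyv x)\<^sup>2 / ((bodyv x)\<^sup>2 + (bodyv y)\<^sup>2) * (lamv x A / bodyv x)
         + 2 * (bodyv y)\<^sup>2 / ((bodyv y)\<^sup>2 + (bodyv x)\<^sup>2) * (lamv y A / bodyv y))\<bar>
    \<le> (3 * 2 ^ Suc k + 2 ^ Suc k * (2 ^ k * Wb)) * M\<^sup>2 * bodyv (x + y) powr (2 * d)"
proof -
  note prim = unimodular_primitive[OF uni]
  have pos: "0 < bodyv x" "0 < bodyv y" "0 < bodyv (x - y)" "0 < bodyv (x + y)"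
    using bodyv_pos prim by auto
  have W: "tri_W x y {} = 0" "\<And>D. \<bar>tri_W x y D\<bar> \<le> Wb"
    using tri_W_body[OF uni] Wb by (simp_all add: tri_W_def abs_mult spin_sign_def)
  have "0 \<le> Wb" using W(2)[of "{}"] by simp
  have "A \<noteq> {}" using A(2) by auto
  note identity = ratio_defect_identity[OF pos bodyv_ptolemy[OF uni] coeff_ptolemy[OF uni A(1) this]]
  have m4: "\<bar>gmul N (gmul N (lamv x) (lamv y)) (tri_W x y) A\<bar>
      \<le> 2 ^ Suc k * (2 ^ k * Wb) * ((M * bodyv x powr (1 + d)) * (M * bodyv y powr (1 + d)))"
    using abs_gmul_mu_coeff_bound[OF L prim(1,2) A, where W = "tri_W x y" and Wb = Wb, OF W]
    by (simp add: algebra_simps)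
  show ?thesis
    unfolding identity
    using mixed_terms_bound[OF pos(1-3) _ le d _ _
        abs_gmul_mixed_coeff_bound[OF L prim(1,1) A] abs_gmul_mixed_coeff_bound[OF L prim(2,2) A]
        abs_gmul_mixed_coeff_bound[OF L prim(4,3) A] m4]
      bodyv_ptolemy[OF uni] \<open>0 \<le> Wb\<close>
    by (simp add: mult.commute)
qed

definition tree_U :: "int \<times> int \<Rightarrow> int \<times> int \<Rightarrow> nat set \<Rightarrow> int \<times> int \<Rightarrow> real" where
  "tree_U P Q A x = lamv (basis_comb P Q x) A / bodyv (basis_comb P Q x)"

lemma averaging_recursion_tree_U:
  assumes uni: "\<bar>det2 P Q\<bar> = 1" and asc: "bodyv (P - Q) \<le> bodyv (P + Q)"
    and L: "coeff_bound k d M" and d: "0 \<le> d" and A: "A \<subseteq> {1..N}" "card A = Suc k"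
    and Wb: "\<And>D. \<bar>mu_prod {arc_of P, arc_of Q, arc_of (P - Q)} D\<bar> \<le> Wb"
  shows "averaging_recursion (tree_E P Q) (tree_U P Q A)
    ((3 * 2 ^ Suc k + 2 ^ Suc k * (2 ^ k * Wb)) * M\<^sup>2) (2 * d)"
proof -
  interpret ptolemy_tree "tree_E P Q" by (rule ptolemy_tree_tree_E[OF uni asc])
  show ?thesis
  proof
    show "tree_U P Q A (- x) = tree_U P Q A x" for x
      unfolding tree_U_def basis_comb_uminus by simp
    show "\<bar>tree_U P Q A (u - v) + tree_U P Q A (u + v)
        - (weight u v * tree_U P Q A u + weight v u * tree_U P Q A v)\<bar>
      \<le> (3 * 2 ^ Suc k + 2 ^ Suc k * (2 ^ k * Wb)) * M\<^sup>2 * tree_E P Q (u + v) powr (2 * d)"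
      if uv: "sb_pair u v" for u v
    proof -
      let ?x = "basis_comb P Q u" and ?y = "basis_comb P Q v"
      note E = tree_E_node[OF uni uv]
      have "bodyv ?x \<le> bodyv (?x + ?y)" "bodyv ?y \<le> bodyv (?x + ?y)" "bodyv (?x - ?y) \<le> bodyv (?x + ?y)"
        using summands_le[OF uv] ascending[OF uv] unfolding E basis_comb_add basis_comb_diff by simp_all
      from coeff_ratio_defect_bound[OF unimodular_basis_comb[OF uni uv] this L d A]
      show ?thesis
        using Wb mu_prod_tree_const[OF uni uv]
        unfolding weight_def tree_U_def E basis_comb_add basis_comb_diff by simp
    qed
    show "0 \<le> (3 * 2 ^ Suc k + 2 ^ Suc k * (2 ^ k * Wb)) * M\<^sup>2" using Wb[of "{}"] by simp
    show "0 \<le> 2 * d" using d by simp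
  qed
qed

lemma tree_coeff_bound:
  assumes uni: "\<bar>det2 P Q\<bar> = 1" and asc: "bodyv (P - Q) \<le> bodyv (P + Q)"
    and L: "coeff_bound k d M" "0 \<le> d" and A: "A \<subseteq> {1..N}" "card A = Suc k"
    and Wb: "\<And>D. \<bar>mu_prod {arc_of P, arc_of Q, arc_of (P - Q)} D\<bar> \<le> Wb" and "0 < \<epsilon>"
  shows "\<exists>M'. \<forall>u v. sb_pair u v \<longrightarrow>
    \<bar>lamv (basis_comb P Q (u + v)) A\<bar> \<le> M' * bodyv (basis_comb P Q (u + v)) powr (1 + (2 * d + \<epsilon>))"
proof -
  interpret averaging_recursion "tree_E P Q" "tree_U P Q A"
    "(3 * 2 ^ Suc k + 2 ^ Suc k * (2 ^ k * Wb)) * M\<^sup>2" "2 * d"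
    by (rule averaging_recursion_tree_U[OF uni asc L A Wb])
  obtain M' where M': "\<And>u v. sb_pair u v \<Longrightarrow>
      \<bar>tree_U P Q A (u + v)\<bar> \<le> M' * tree_E P Q (u + v) powr (2 * d + \<epsilon>)"
    using U_growth[OF \<open>0 < \<epsilon>\<close>] by blast
  have "\<bar>lamv (basis_comb P Q (u + v)) A\<bar> \<le> M' * bodyv (basis_comb P Q (u + v)) powr (1 + (2 * d + \<epsilon>))"
    if uv: "sb_pair u v" for u v
  proof -
    let ?s = "basis_comb P Q (u + v)"
    have e: "0 < bodyv ?s" using bodyv_pos[OF primitive_tree_node(3)[OF uni uv]] .
    have "\<bar>lamv ?s A\<bar> = \<bar>tree_U P Q A (u + v)\<bar> * bodyv ?s"
      unfolding tree_U_def using e by simp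
    also have "\<dots> \<le> M' * bodyv ?s powr (2 * d + \<epsilon>) * bodyv ?s"
      using M'[OF uv] e unfolding tree_E_node[OF uni uv] by (intro mult_right_mono) auto
    also have "\<dots> = M' * bodyv ?s powr (1 + (2 * d + \<epsilon>))" using e by (simp add: powr_add)
    finally show ?thesis .
  qed
  then show ?thesis by blast
qed

end


section \<open>Three trees cover all arcs\<close>

lemma basis_coords:
  assumes "\<bar>det2 a b\<bar> = 1" "coprime (fst g) (snd g)"
  obtains \<alpha> \<beta> where "g = basis_comb a b (\<alpha>, \<beta>)" "coprime \<alpha> \<beta>"
proof -
  define \<delta> where "\<delta> = det2 a b"
  have "\<delta> = 1 \<or> \<delta> = -1" using assms(1) unfolding \<delta>_def by linarith
  then have \<delta>: "\<delta> * \<delta> = 1" by auto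
  define \<alpha> where "\<alpha> = det2 g b * \<delta>"
  define \<beta> where "\<beta> = det2 a g * \<delta>"
  have "fst (basis_comb a b (\<alpha>, \<beta>)) = fst g * (\<delta> * \<delta>)" "snd (basis_comb a b (\<alpha>, \<beta>)) = snd g * (\<delta> * \<delta>)"
    unfolding basis_comb_def \<alpha>_def \<beta>_def \<delta>_def det2_def by (simp_all add: algebra_simps)
  then have g: "g = basis_comb a b (\<alpha>, \<beta>)" using \<delta> by (simp add: prod_eq_iff)
  have "coprime \<alpha> \<beta>"
  proof (rule coprimeI)
    fix c assume "c dvd \<alpha>" "c dvd \<beta>"
    then have "c dvd fst g" "c dvd snd g"
      by (subst g, simp add: basis_comb_def)+
    then show "is_unit c" using assms(2) coprime_common_divisor by blast
  qed
  with g show ?thesis by (rule that)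
qed

definition in_tree :: "int \<times> int \<Rightarrow> int \<times> int \<Rightarrow> int \<times> int \<Rightarrow> bool" where
  "in_tree P Q g \<longleftrightarrow> (\<exists>u v. sb_pair u v \<and> g = arc_of (basis_comb P Q (u + v)))"

lemma in_treeI:
  assumes "1 \<le> i" "1 \<le> j" "coprime i j" "g = basis_comb P Q (i, j)"
  shows "in_tree P Q (arc_of g)"
  using sb_pair_mediant_surj[OF assms(1-3)] assms(4) unfolding in_tree_def by metis

lemma arcs_covered_positive:
  assumes "1 \<le> \<alpha>" "1 \<le> \<beta>" "coprime \<alpha> \<beta>"
  shows "arc_of (basis_comb a b (\<alpha>, \<beta>)) = arc_of (a + b)
    \<or> in_tree a (a + b) (arc_of (basis_comb a b (\<alpha>, \<beta>)))
    \<or> in_tree (a + b) b (arc_of (basis_comb a b (\<alpha>, \<beta>)))"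
proof -
  consider "\<alpha> = \<beta>" | "\<beta> < \<alpha>" | "\<alpha> < \<beta>" by linarith
  then show ?thesis
  proof cases
    case 1
    then have "\<alpha> = 1" using assms by simp
    then show ?thesis using 1 by simp
  next
    case 2
    have "coprime (\<alpha> - \<beta>) \<beta>" using assms(3) by (simp add: coprime_iff_gcd_eq_1 gcd_diff1)
    moreover have "basis_comb a b (\<alpha>, \<beta>) = basis_comb a (a + b) (\<alpha> - \<beta>, \<beta>)"
      by (simp add: basis_comb_def algebra_simps)
    ultimately show ?thesis using in_treeI[of "\<alpha> - \<beta>" \<beta>] 2 assms by simp
  next
    case 3
    have "coprime \<alpha> (\<beta> - \<alpha>)" using assms(3) gcd_diff1[of \<beta> \<alpha>]
      by (simp add: coprime_iff_gcd_eq_1 gcd.commute)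
    moreover have "basis_comb a b (\<alpha>, \<beta>) = basis_comb (a + b) b (\<alpha>, \<beta> - \<alpha>)"
      by (simp add: basis_comb_def algebra_simps)
    ultimately show ?thesis using in_treeI[of \<alpha> "\<beta> - \<alpha>"] 3 assms by simp
  qed
qed

lemma arcs_covered_same_sign:
  assumes "0 < \<alpha> * \<beta>" "coprime \<alpha> \<beta>"
  shows "arc_of (basis_comb a b (\<alpha>, \<beta>)) = arc_of (a + b)
    \<or> in_tree a (a + b) (arc_of (basis_comb a b (\<alpha>, \<beta>)))
    \<or> in_tree (a + b) b (arc_of (basis_comb a b (\<alpha>, \<beta>)))"
proof -
  have neg: "basis_comb a b (- \<alpha>, - \<beta>) = - basis_comb a b (\<alpha>, \<beta>)" by (simp add: basis_comb_def)
  from assms(1) consider "1 \<le> \<alpha>" "1 \<le> \<beta>" | "1 \<le> - \<alpha>" "1 \<le> - \<beta>"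
    by (auto simp: zero_less_mult_iff)
  then show ?thesis
  proof cases
    case 1
    then show ?thesis using arcs_covered_positive[OF 1 assms(2)] by simp
  next
    case 2
    then show ?thesis using arcs_covered_positive[OF 2, of a b] assms(2) neg by simp
  qed
qed

lemma arcs_covered_opposite_sign:
  assumes "\<alpha> * \<beta> < 0" "coprime \<alpha> \<beta>"
  shows "in_tree b (- a) (arc_of (basis_comb a b (\<alpha>, \<beta>)))"
proof -
  consider "1 \<le> - \<alpha>" "1 \<le> \<beta>" | "1 \<le> \<alpha>" "1 \<le> - \<beta>"
    using assms(1) by (auto simp: mult_less_0_iff)
  then show ?thesis
  proof cases
    case 1
    have "basis_comb a b (\<alpha>, \<beta>) = basis_comb b (- a) (\<beta>, - \<alpha>)"
      by (simp add: basis_comb_def)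
    then show ?thesis using in_treeI[OF 1(2,1)] assms(2) by (simp add: coprime_commute)
  next
    case 2
    have "in_tree b (- a) (arc_of (basis_comb b (- a) (- \<beta>, \<alpha>)))"
      by (rule in_treeI) (use 2 assms(2) in \<open>auto simp: coprime_commute\<close>)
    moreover have "basis_comb b (- a) (- \<beta>, \<alpha>) = - basis_comb a b (\<alpha>, \<beta>)"
      by (simp add: basis_comb_def)
    ultimately show ?thesis by simp
  qed
qed

lemma arcs_covered:
  assumes "\<bar>det2 a b\<bar> = 1" "is_arc g"
  shows "g \<in> {arc_of a, arc_of b, arc_of (a + b)} \<or> in_tree a (a + b) g \<or> in_tree (a + b) b g
    \<or> in_tree b (- a) g"
proof -
  have g: "arc_of g = g" using arc_of_arc[OF assms(2)] .
  obtain \<alpha> \<beta> where ab: "g = basis_comb a b (\<alpha>, \<beta>)" "coprime \<alpha> \<beta>"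
    using basis_coords[OF assms(1)] assms(2) unfolding is_arc_def by blast
  consider "\<alpha> = 0" | "\<beta> = 0" | "0 < \<alpha> * \<beta>" | "\<alpha> * \<beta> < 0"
    by (metis linorder_neqE_linordered_idom mult_eq_0_iff)
  then show ?thesis
  proof cases
    case 1
    then have "\<beta> = 1 \<or> \<beta> = -1" using ab(2) by auto
    then have "g = b \<or> g = - b" using ab(1) 1 by (auto simp: basis_comb_def prod_eq_iff)
    then show ?thesis using g by auto
  next
    case 2
    then have "\<alpha> = 1 \<or> \<alpha> = -1" using ab(2) by auto
    then have "g = a \<or> g = - a" using ab(1) 2 by (auto simp: basis_comb_def prod_eq_iff)
    then show ?thesis using g by auto
  next
    case 3
    then show ?thesis using arcs_covered_same_sign[OF 3 ab(2), of a b] ab(1) g by auto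
  next
    case 4
    then show ?thesis using arcs_covered_opposite_sign[OF 4 ab(2), of b a] ab(1) g by auto
  qed
qed

context super_teich
begin

lemma flip_sum_ratio:
  assumes "\<bar>det2 P Q\<bar> = 1"
  shows "bodyv (P + Q) + bodyv (P - Q) = markov_ratio (bodyv P) (bodyv Q) (bodyv (P - Q)) * bodyv P * bodyv Q"
  using markov_ratio_flip(2)[OF _ _ _ _ bodyv_ptolemy[OF assms]] bodyv_pos unimodular_primitive[OF assms]
  by simp

lemma tree_E_lower:
  assumes "\<bar>det2 P Q\<bar> = 1" "bodyv (P - Q) \<le> bodyv (P + Q)" "sb_pair u v"
  shows "min (bodyv P) (bodyv Q) \<le> bodyv (basis_comb P Q (u + v))"
proof -
  interpret ptolemy_tree "tree_E P Q" by (rule ptolemy_tree_tree_E[OF assms(1,2)])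
  show ?thesis
    using E_root_min_le_sum[OF assms(3)] tree_E_node(3)[OF assms(1,3)] tree_E_node(1,2)[OF assms(1) sb_pair.root]
    unfolding E_root_min_def by simp
qed

lemma abs_mu_prod_le: "\<bar>mu_prod T D\<bar> \<le> (\<Sum>D'\<in>Pow {1..N}. \<bar>mu_prod T D'\<bar>)"
proof (cases "D \<subseteq> {1..N}")
  case True
  then show ?thesis by (intro member_le_sum) auto
next
  case False
  then show ?thesis unfolding mu_prod_def using gmul_outside by (simp add: sum_nonneg)
qed

lemma coeff_bound_zero: "coeff_bound 0 0 1"
  unfolding coeff_bound_def bodyv_def by (auto simp: card_eq_0_iff finite_subset)

lemma gnorm_soul_le:
  assumes "coeff_bound N d M" "is_arc g"
  shows "gnorm N (soul (lam g)) \<le> 2 ^ N * M * body (lam g) powr (1 + d)"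
proof -
  have lam: "lamv g = lam g" "bodyv g = body (lam g)"
    unfolding bodyv_def lamv_def body_def using arc_of_arc[OF assms(2)] by simp_all
  have prim: "primitive g" using assms(2) unfolding is_arc_def primitive_def by simp
  have bound: "\<bar>soul (lam g) A\<bar> \<le> M * body (lam g) powr (1 + d)" if "A \<in> Pow {1..N}" for A
  proof -
    have "card A \<le> N" using that card_mono[of "{1..N}" A] by auto
    then have "\<bar>lam g A\<bar> \<le> M * body (lam g) powr (1 + d)"
      using coeff_boundD[OF assms(1) prim] that lam by fastforce
    then show ?thesis unfolding soul_def by (cases "A = {}") auto
  qed
  have "gnorm N (soul (lam g)) \<le> (\<Sum>A\<in>Pow {1..N}. M * body (lam g) powr (1 + d))"
    unfolding gnorm_def using bound by (rule sum_mono)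
  also have "\<dots> = 2 ^ N * M * body (lam g) powr (1 + d)" by (simp add: card_Pow)
  finally show ?thesis .
qed

end

lemma le_max_mult:
  fixes x a b g :: real
  assumes "x \<le> a * g \<or> x \<le> b * g" "0 \<le> g"
  shows "x \<le> max a b * g"
  using assms mult_right_mono[OF max.cobounded1[of a b] assms(2)]
    mult_right_mono[OF max.cobounded2[of b a] assms(2)]
  by linarith

lemma finite_uniform_bound:
  fixes F :: "'i \<Rightarrow> 'a \<Rightarrow> real" and G :: "'a \<Rightarrow> real"
  assumes "finite I" "\<And>i. i \<in> I \<Longrightarrow> \<exists>m. \<forall>x\<in>X i. F i x \<le> m * G x"
    and "\<And>i x. i \<in> I \<Longrightarrow> x \<in> X i \<Longrightarrow> 0 \<le> G x"
  shows "\<exists>m. \<forall>i\<in>I. \<forall>x\<in>X i. F i x \<le> m * G x"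
  using assms
proof (induction I rule: finite_induct)
  case empty
  then show ?case by simp
next
  case (insert i I)
  obtain m1 where m1: "\<forall>x\<in>X i. F i x \<le> m1 * G x" using insert.prems(1) by blast
  obtain m2 where m2: "\<forall>j\<in>I. \<forall>x\<in>X j. F j x \<le> m2 * G x" using insert.IH insert.prems by blast
  have "F j x \<le> max m1 m2 * G x" if "j \<in> insert i I" "x \<in> X j" for j x
    using that m1 m2 insert.prems(2) by (intro le_max_mult) auto
  then show ?case by blast
qed

text \<open>The three trees hanging off the edges of a reduced triangle (a, b, a + b) grow away
  from it and, together with its sides, exhaust all arcs.\<close>

locale reduced_frame = super_teich +
  fixes a b :: "int \<times> int"
  assumes unimodular_ab: "unimodular (a, b)"
    and reduced_ab: "reduced (tri_ratio (a, b)) (a, b)"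
begin

definition tree_roots :: "((int \<times> int) \<times> (int \<times> int)) set" where
  "tree_roots = {(a, a + b), (a + b, b), (b, - a)}"

definition body_min :: real where
  "body_min = min (bodyv a) (min (bodyv b) (bodyv (a + b)))"

lemma tree_roots_ascending:
  assumes "(P, Q) \<in> tree_roots"
  shows "\<bar>det2 P Q\<bar> = 1" "bodyv (P - Q) \<le> bodyv (P + Q)"
proof -
  let ?h = "tri_ratio (a, b)"
  have uni: "\<bar>det2 a b\<bar> = 1" using unimodular_ab unfolding unimodular_def by simp
  have "0 < bodyv a" "0 < bodyv b" "0 < bodyv (a + b)"
    using bodyv_pos unimodular_primitive[OF uni] by auto
  then have h: "0 < ?h" unfolding tri_ratio_def side1_def side2_def side3_def
    by (simp add: markov_ratio_pos)
  have "?h * (2 * bodyv (a + b)) \<le> ?h * (?h * bodyv a * bodyv b)"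
    "?h * (2 * bodyv a) \<le> ?h * (?h * bodyv b * bodyv (a + b))"
    "?h * (2 * bodyv b) \<le> ?h * (?h * bodyv a * bodyv (a + b))"
    using reduced_ab unfolding reduced_def markov_reduced_def side1_def side2_def side3_def
    by (simp_all add: algebra_simps)
  then have reduced: "2 * bodyv (a + b) \<le> ?h * bodyv a * bodyv b"
    "2 * bodyv a \<le> ?h * bodyv b * bodyv (a + b)" "2 * bodyv b \<le> ?h * bodyv a * bodyv (a + b)"
    using h by simp_all
  have ratio: "markov_ratio (bodyv a) (bodyv (a + b)) (bodyv b) = ?h"
    "markov_ratio (bodyv (a + b)) (bodyv b) (bodyv a) = ?h"
    "markov_ratio (bodyv b) (bodyv a) (bodyv (a + b)) = ?h"
    unfolding tri_ratio_def side1_def side2_def side3_def using markov_ratio_perm by simp_all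
  show uniPQ: "\<bar>det2 P Q\<bar> = 1"
    using assms uni det2_swap[of b a] unfolding tree_roots_def by auto
  have "bodyv (P + Q) + bodyv (P - Q) \<ge> 2 * bodyv (P - Q)"
    using flip_sum_ratio[OF uniPQ] assms reduced ratio unfolding tree_roots_def
    by (auto simp: algebra_simps)
  then show "bodyv (P - Q) \<le> bodyv (P + Q)" by simp
qed

lemma tree_roots_mu_prod:
  "(P, Q) \<in> tree_roots \<Longrightarrow>
    mu_prod {arc_of P, arc_of Q, arc_of (P - Q)} = mu_prod {arc_of a, arc_of b, arc_of (a + b)}"
  unfolding tree_roots_def by (auto simp: insert_commute add.commute)

lemma primitive_cases:
  assumes "primitive z"
  obtains "arc_of z \<in> {arc_of a, arc_of b, arc_of (a + b)}"
    | P Q u v where "(P, Q) \<in> tree_roots" "sb_pair u v" "arc_of z = arc_of (basis_comb P Q (u + v))"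
proof -
  have "\<bar>det2 a b\<bar> = 1" using unimodular_ab unfolding unimodular_def by simp
  from arcs_covered[OF this is_arc_arc_of[OF assms]]
  consider (root) "arc_of z \<in> {arc_of a, arc_of b, arc_of (a + b)}"
    | (tree) P Q where "(P, Q) \<in> tree_roots" "in_tree P Q (arc_of z)"
    unfolding tree_roots_def by blast
  then show ?thesis
  proof cases
    case root
    then show ?thesis by (rule that(1))
  next
    case (tree P Q)
    then obtain u v where "sb_pair u v" "arc_of z = arc_of (basis_comb P Q (u + v))"
      unfolding in_tree_def by auto
    with tree(1) show ?thesis by (rule that(2))
  qed
qed

lemma body_min_pos: "0 < body_min"
  using bodyv_pos unimodular_primitive unimodular_ab unfolding body_min_def unimodular_def by simp

lemma body_min_le:
  assumes "primitive z"
  shows "body_min \<le> bodyv z"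
  using assms
proof (cases rule: primitive_cases)
  case 1
  then have "bodyv (arc_of z) \<in> {bodyv (arc_of a), bodyv (arc_of b), bodyv (arc_of (a + b))}"
    by (auto simp del: bodyv_arc_of)
  then show ?thesis unfolding body_min_def by auto
next
  case (2 P Q u v)
  have "body_min \<le> min (bodyv P) (bodyv Q)"
    using 2(1) unfolding tree_roots_def body_min_def by auto
  also have "\<dots> \<le> bodyv (basis_comb P Q (u + v))"
    using tree_E_lower[OF tree_roots_ascending[OF 2(1)] 2(2)] .
  also have "\<dots> = bodyv z" using 2(3) by (metis bodyv_arc_of)
  finally show ?thesis .
qed

lemma coeff_bound_weaken:
  assumes "coeff_bound k d M" "d \<le> d'"
  shows "coeff_bound k d' (\<bar>M\<bar> * body_min powr (d - d'))"
  unfolding coeff_bound_def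
proof (intro allI impI)
  fix z B assume z: "primitive z" and B: "B \<subseteq> {1..N}" "card B \<le> k"
  have "\<bar>lamv z B\<bar> \<le> \<bar>M\<bar> * bodyv z powr (1 + d)"
    using coeff_boundD[OF assms(1) z B] by (simp add: order_trans[OF _ mult_right_mono])
  also have "\<dots> \<le> \<bar>M\<bar> * (body_min powr ((1 + d) - (1 + d')) * bodyv z powr (1 + d'))"
    using powr_le_scaled_powr[OF body_min_pos body_min_le[OF z], of "1 + d" "1 + d'"] assms(2)
    by (intro mult_left_mono) auto
  finally show "\<bar>lamv z B\<bar> \<le> \<bar>M\<bar> * body_min powr (d - d') * bodyv z powr (1 + d')"
    by (simp add: mult.assoc)
qed

lemma root_arcs_coeff_bound:
  assumes "0 \<le> d"
  shows "\<exists>m. \<forall>z B. primitive z \<longrightarrow> arc_of z \<in> {arc_of a, arc_of b, arc_of (a + b)} \<longrightarrow>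
    B \<subseteq> {1..N} \<longrightarrow> \<bar>lamv z B\<bar> \<le> m * bodyv z powr (1 + d)"
proof -
  define S where "S = (\<Sum>B\<in>Pow {1..N}. \<bar>lamv a B\<bar> + \<bar>lamv b B\<bar> + \<bar>lamv (a + b) B\<bar>)"
  have "\<bar>lamv z B\<bar> \<le> S * body_min powr - (1 + d) * bodyv z powr (1 + d)"
    if z: "primitive z" "arc_of z \<in> {arc_of a, arc_of b, arc_of (a + b)}" and B: "B \<subseteq> {1..N}" for z B
  proof -
    have "lamv (arc_of z) \<in> {lamv (arc_of a), lamv (arc_of b), lamv (arc_of (a + b))}"
      using z(2) by (auto simp del: lamv_arc_of)
    then have "lamv z \<in> {lamv a, lamv b, lamv (a + b)}" by simp
    then have "\<bar>lamv z B\<bar> \<le> \<bar>lamv a B\<bar> + \<bar>lamv b B\<bar> + \<bar>lamv (a + b) B\<bar>" by auto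
    also have "\<dots> \<le> S" unfolding S_def using B by (intro member_le_sum) auto
    also have "\<dots> \<le> S * (body_min powr - (1 + d) * bodyv z powr (1 + d))"
    proof -
      have "bodyv z powr 0 \<le> body_min powr (0 - (1 + d)) * bodyv z powr (1 + d)"
        using powr_le_scaled_powr[OF body_min_pos body_min_le[OF z(1)], of 0 "1 + d"] assms by simp
      moreover have "0 \<le> S" unfolding S_def by (simp add: sum_nonneg)
      ultimately show ?thesis using bodyv_pos[OF z(1)] by (simp add: mult_le_cancel_left1 minus_add)
    qed
    finally show ?thesis by (simp add: mult.assoc)
  qed
  then show ?thesis by blast
qed

text \<open>The defect is quadratic in lower coefficients: exponent d in degree k yields 2 d + epsilon
  in degree k + 1, which is delta for d = epsilon = delta / 3.\<close>

lemma trees_coeff_bound: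
  assumes "coeff_bound k (\<delta> / 3) M" "0 < \<delta>"
  shows "\<exists>m. \<forall>(P, Q)\<in>tree_roots. \<forall>B. B \<subseteq> {1..N} \<longrightarrow> card B = Suc k \<longrightarrow>
    (\<forall>u v. sb_pair u v \<longrightarrow> \<bar>lamv (basis_comb P Q (u + v)) B\<bar> \<le> m * bodyv (basis_comb P Q (u + v)) powr (1 + \<delta>))"
proof -
  let ?I = "tree_roots \<times> {B. B \<subseteq> {1..N} \<and> card B = Suc k}"
  let ?X = "\<lambda>((P, Q), B). {basis_comb P Q (u + v) |u v. sb_pair u v}"
  have "\<exists>m. \<forall>i\<in>?I. \<forall>z\<in>?X i. \<bar>lamv z (snd i)\<bar> \<le> m * bodyv z powr (1 + \<delta>)"
  proof (rule finite_uniform_bound)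
    show "finite ?I" unfolding tree_roots_def by (auto intro: finite_subset[of _ "Pow {1..N}"])
    fix i assume "i \<in> ?I"
    then obtain P Q B where i: "i = ((P, Q), B)" "(P, Q) \<in> tree_roots" "B \<subseteq> {1..N}" "card B = Suc k"
      by auto
    have "\<bar>mu_prod {arc_of P, arc_of Q, arc_of (P - Q)} D\<bar>
        \<le> (\<Sum>D'\<in>Pow {1..N}. \<bar>mu_prod {arc_of a, arc_of b, arc_of (a + b)} D'\<bar>)" for D
      using abs_mu_prod_le tree_roots_mu_prod[OF i(2)] by simp
    from tree_coeff_bound[OF tree_roots_ascending[OF i(2)] assms(1) _ i(3,4) this, of "\<delta> / 3"] assms(2)
    obtain M' where "\<forall>u v. sb_pair u v \<longrightarrow>
        \<bar>lamv (basis_comb P Q (u + v)) B\<bar> \<le> M' * bodyv (basis_comb P Q (u + v)) powr (1 + \<delta>)"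
      by auto
    then have "\<forall>z\<in>?X i. \<bar>lamv z (snd i)\<bar> \<le> M' * bodyv z powr (1 + \<delta>)" unfolding i(1) by auto
    then show "\<exists>m. \<forall>z\<in>?X i. \<bar>lamv z (snd i)\<bar> \<le> m * bodyv z powr (1 + \<delta>)" by blast
  qed simp
  then obtain m where m: "\<forall>i\<in>?I. \<forall>z\<in>?X i. \<bar>lamv z (snd i)\<bar> \<le> m * bodyv z powr (1 + \<delta>)" ..
  have "\<bar>lamv (basis_comb P Q (u + v)) B\<bar> \<le> m * bodyv (basis_comb P Q (u + v)) powr (1 + \<delta>)"
    if "(P, Q) \<in> tree_roots" "B \<subseteq> {1..N}" "card B = Suc k" "sb_pair u v" for P Q B u v
  proof -
    have "((P, Q), B) \<in> ?I" using that(1-3) by simp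
    moreover have "basis_comb P Q (u + v) \<in> ?X ((P, Q), B)"
      using that(4) by (simp only: prod.case) blast
    ultimately have "\<bar>lamv (basis_comb P Q (u + v)) (snd ((P, Q), B))\<bar>
        \<le> m * bodyv (basis_comb P Q (u + v)) powr (1 + \<delta>)"
      by (rule bspec[OF bspec[OF m]])
    then show ?thesis by simp
  qed
  then show ?thesis by blast
qed

lemma top_degree_coeff_bound:
  assumes "coeff_bound k (\<delta> / 3) M" "0 < \<delta>"
  shows "\<exists>m. \<forall>z B. primitive z \<longrightarrow> B \<subseteq> {1..N} \<longrightarrow> card B = Suc k \<longrightarrow>
    \<bar>lamv z B\<bar> \<le> m * bodyv z powr (1 + \<delta>)"
proof -
  obtain m1 where m1: "\<forall>z B. primitive z \<longrightarrow> arc_of z \<in> {arc_of a, arc_of b, arc_of (a + b)} \<longrightarrow>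
      B \<subseteq> {1..N} \<longrightarrow> \<bar>lamv z B\<bar> \<le> m1 * bodyv z powr (1 + \<delta>)"
    using root_arcs_coeff_bound[of \<delta>] assms(2) by auto
  obtain m2 where m2: "\<forall>(P, Q)\<in>tree_roots. \<forall>B. B \<subseteq> {1..N} \<longrightarrow> card B = Suc k \<longrightarrow>
      (\<forall>u v. sb_pair u v \<longrightarrow>
        \<bar>lamv (basis_comb P Q (u + v)) B\<bar> \<le> m2 * bodyv (basis_comb P Q (u + v)) powr (1 + \<delta>))"
    using trees_coeff_bound[OF assms] by blast
  have "\<bar>lamv z B\<bar> \<le> max m1 m2 * bodyv z powr (1 + \<delta>)"
    if z: "primitive z" and B: "B \<subseteq> {1..N}" "card B = Suc k" for z B
  proof (rule le_max_mult)
    from z show "\<bar>lamv z B\<bar> \<le> m1 * bodyv z powr (1 + \<delta>) \<or> \<bar>lamv z B\<bar> \<le> m2 * bodyv z powr (1 + \<delta>)"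
    proof (cases rule: primitive_cases)
      case 1
      then show ?thesis using m1 z B by blast
    next
      case (2 P Q u v)
      then have "lamv z = lamv (basis_comb P Q (u + v))" "bodyv z = bodyv (basis_comb P Q (u + v))"
        by (metis lamv_arc_of, metis bodyv_arc_of)
      then show ?thesis using m2 2(1,2) B by fastforce
    qed
  qed simp
  then show ?thesis by blast
qed

lemma coeff_bound_Suc:
  assumes "coeff_bound k (\<delta> / 3) M" "0 < \<delta>"
  shows "\<exists>M'. coeff_bound (Suc k) \<delta> M'"
proof -
  obtain m where m: "\<forall>z B. primitive z \<longrightarrow> B \<subseteq> {1..N} \<longrightarrow> card B = Suc k \<longrightarrow>
      \<bar>lamv z B\<bar> \<le> m * bodyv z powr (1 + \<delta>)"
    using top_degree_coeff_bound[OF assms] by blast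
  let ?M = "\<bar>M\<bar> * body_min powr (\<delta> / 3 - \<delta>)"
  have low: "coeff_bound k \<delta> ?M" using coeff_bound_weaken[OF assms(1), of \<delta>] assms(2) by simp
  have "coeff_bound (Suc k) \<delta> (max ?M m)"
    unfolding coeff_bound_def
  proof (intro allI impI le_max_mult)
    fix z B assume z: "primitive z" and B: "B \<subseteq> {1..N}" "card B \<le> Suc k"
    show "\<bar>lamv z B\<bar> \<le> ?M * bodyv z powr (1 + \<delta>) \<or> \<bar>lamv z B\<bar> \<le> m * bodyv z powr (1 + \<delta>)"
    proof (cases "card B \<le> k")
      case True
      then show ?thesis using coeff_boundD[OF low z B(1)] by blast
    next
      case False
      then show ?thesis using m[rule_format, OF z B(1)] B(2) by simp
    qed
  qed simp
  then show ?thesis ..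
qed

lemma coeff_bound_exists: "0 < \<delta> \<Longrightarrow> \<exists>M. coeff_bound k \<delta> M"
proof (induction k arbitrary: \<delta>)
  case 0
  then show ?case using coeff_bound_weaken[OF coeff_bound_zero, of \<delta>] by auto
next
  case (Suc k)
  then obtain M where "coeff_bound k (\<delta> / 3) M" by fastforce
  then show ?case using coeff_bound_Suc Suc.prems by blast
qed

end

theorem theorem5p5:
  fixes N :: nat and lam :: "arc \<Rightarrow> grass" and mu1 mu2 :: "arc set \<Rightarrow> grass"
    and al be :: bool
  assumes "super_teich_point N lam mu1 mu2 al be"
  shows "\<forall>\<delta>::real. \<delta> > 0 \<longrightarrow> (\<exists>M::real. M \<ge> 1 \<and>
           (\<forall>a. is_arc a \<longrightarrow>
              gnorm N (soul (lam a)) \<le> M * \<bar>body (lam a)\<bar> powr (1 + \<delta>)))"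
proof (intro allI impI)
  fix \<delta> :: real assume "0 < \<delta>"
  interpret super_teich N lam mu1 mu2 al be by (rule super_teich.intro[OF assms])
  have "unimodular ((1, 0), (0, 1))" unfolding unimodular_def by (simp add: det2_def)
  then obtain p where "unimodular p" "reduced (tri_ratio p) p" using reduced_exists by metis
  then interpret reduced_frame N lam mu1 mu2 al be "fst p" "snd p" by unfold_locales simp_all
  obtain M where M: "coeff_bound N \<delta> M" using coeff_bound_exists[OF \<open>0 < \<delta>\<close>] ..
  have "gnorm N (soul (lam g)) \<le> max 1 (2 ^ N * M) * \<bar>body (lam g)\<bar> powr (1 + \<delta>)" if "is_arc g" for g
  proof -
    have "2 ^ N * M * body (lam g) powr (1 + \<delta>) \<le> max 1 (2 ^ N * M) * body (lam g) powr (1 + \<delta>)"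
      by (intro mult_right_mono) simp_all
    moreover have "\<bar>body (lam g)\<bar> = body (lam g)" using lam_arc[OF that] by simp
    ultimately show ?thesis using gnorm_soul_le[OF M that] by simp
  qed
  then show "\<exists>M \<ge> 1. \<forall>g. is_arc g \<longrightarrow> gnorm N (soul (lam g)) \<le> M * \<bar>body (lam g)\<bar> powr (1 + \<delta>)"
    by (intro exI[of _ "max 1 (2 ^ N * M)"]) auto
qed

end
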